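(* Let $X$ be an undirected graph and let $f:Y\to X$, $g:Z\to X$ be objects of $C_X$ such that $Y$ and $Z$ have no loops and, for every $p\ge1$, have finitely many $p$-cycles without backtracking. If there is a morphism $h:Y\to Z$ in $C_X$ (from $f$ to $g$) which is a weak equivalence for the model on $C_X$ defined by counting $R_X=\bigcup_{p\ge1}R^p_X$, then $Y$ and $Z$ have the same Ihara zeta function.
   Context: An undirected graph has nodes $X(0)$, half-arcs $X(1)$, $s,t:X(1)\to X(0)$, and an involution $\iota$ with $s\circ\iota=t$; morphisms commute with $s,t,\iota$. An arc is a pair $\{u,\iota(u)\}$; a loop is an arc whose source and target coincide. $X(x,* )$ is the set of arcs having $x$ as source or target. A morphism $f$ is a covering if for every node $x$ the induced map $X(x,* )\to Y(f_0(x),* )$ is bijective. $C_X$: objects are coverings $Y\to X$; morphisms from $f:Y\to X$ to $g:Z\to X$ are coverings $h:Y\to Z$ with $g\circ h=f$. For $p\ge1$, $c^p_U$ has nodes $\mathbb{Z}/p\mathbb{Z}$ and half-arcs $[n]^\pm$ with $s([n]^+)=[n]$, $t([n]^+)=[n+1]$, $s([n]^-)=[n+1]$, $t([n]^-)=[n]$, $\iota([n]^+)=[n]^-$; a $p$-cycle is a morphism $c^p_U\to Y$, with backtracking if $h_1([n+1]^+)=h_1([n]^-)$ for some $n$. $R^p_X$ is the set of objects $U\to X$ of $C_X$ where $U$ contains a subgraph isomorphic to $c^p_U$ and removing its arcs leaves a forest each of whose trees meets the cycle in exactly one node. A morphism $h$ from $f:Y\to X$ to $g:Z\to X$ in $C_X$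 is a weak equivalence if for every $p\ge1$ and every $U\in R^p_X$, composition with $h$ is a bijection $\mathrm{Hom}_{C_X}(U,Y)\to\mathrm{Hom}_{C_X}(U,Z)$. If $c_p(Y)$ denotes the number of $p$-cycles of $Y$ without backtracking, the Ihara zeta function of $Y$ is $\exp\big(\sum_{p\ge1} c_p(Y)t^p/p\big)$. *)

theory Defs
  imports Main "HOL-Library.FuncSet" "HOL-Computational_Algebra.Formal_Power_Series"
begin

text \<open>Undirected graphs (Serre-style): nodes X(0), half-arcs X(1), source, target and
  an involution on half-arcs with s o iota = t.  Carriers are sets inside ambient types.\<close>

record ('v, 'h) ugraph =
  nodes :: "'v set"
  harcs :: "'h set"
  src   :: "'h \<Rightarrow> 'v"
  tgt   :: "'h \<Rightarrow> 'v"
  inv   :: "'h \<Rightarrow> 'h"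

definition wf_graph :: "('v, 'h) ugraph \<Rightarrow> bool" where
  "wf_graph G \<longleftrightarrow>
     (\<forall>u\<in>harcs G. src G u \<in> nodes G \<and> tgt G u \<in> nodes G \<and> inv G u \<in> harcs G
        \<and> inv G (inv G u) = u \<and> src G (inv G u) = tgt G u)"

definition morphism :: "('v, 'h) ugraph \<Rightarrow> ('w, 'k) ugraph \<Rightarrow> ('v \<Rightarrow> 'w) \<Rightarrow> ('h \<Rightarrow> 'k) \<Rightarrow> bool" where
  "morphism G H f0 f1 \<longleftrightarrow>
     (\<forall>v\<in>nodes G. f0 v \<in> nodes H) \<and>
     (\<forall>u\<in>harcs G. f1 u \<in> harcs H \<and> src H (f1 u) = f0 (src G u)
        \<and> tgt H (f1 u) = f0 (tgt G u) \<and> inv H (f1 u) = f1 (inv G u))"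

text \<open>An arc is a pair {u, iota u}; X(x,*) is the set of arcs having x as source or target.\<close>
definition arcs_at :: "('v, 'h) ugraph \<Rightarrow> 'v \<Rightarrow> 'h set set" where
  "arcs_at G x = {{u, inv G u} | u. u \<in> harcs G \<and> (src G u = x \<or> tgt G u = x)}"

definition has_loop :: "('v, 'h) ugraph \<Rightarrow> bool" where
  "has_loop G \<longleftrightarrow> (\<exists>u\<in>harcs G. src G u = tgt G u)"

definition covering :: "('v, 'h) ugraph \<Rightarrow> ('w, 'k) ugraph \<Rightarrow> ('v \<Rightarrow> 'w) \<Rightarrow> ('h \<Rightarrow> 'k) \<Rightarrow> bool" where
  "covering G H f0 f1 \<longleftrightarrow> morphism G H f0 f1 \<and>
     (\<forall>x\<in>nodes G. bij_betw (\<lambda>A. f1 ` A) (arcs_at G x) (arcs_at H (f0 x)))"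

text \<open>The cycle graph c^p_U: nodes Z/pZ = {0..<p}; half-arc [n]^+ is (n, True),
  [n]^- is (n, False).\<close>
definition cyc :: "nat \<Rightarrow> (nat, nat \<times> bool) ugraph" where
  "cyc p = \<lparr> nodes = {0..<p},
             harcs = {0..<p} \<times> UNIV,
             src = (\<lambda>(n, b). if b then n else Suc n mod p),
             tgt = (\<lambda>(n, b). if b then Suc n mod p else n),
             inv = (\<lambda>(n, b). (n, \<not> b)) \<rparr>"

definition p_cycles :: "nat \<Rightarrow> ('v, 'h) ugraph \<Rightarrow> ((nat \<Rightarrow> 'v) \<times> (nat \<times> bool \<Rightarrow> 'h)) set" where
  "p_cycles p Y = {(h0, h1). h0 \<in> extensional (nodes (cyc p)) \<and> h1 \<in> extensional (harcs (cyc p))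
                        \<and> morphism (cyc p) Y h0 h1}"

definition backtracking :: "nat \<Rightarrow> (nat \<times> bool \<Rightarrow> 'h) \<Rightarrow> bool" where
  "backtracking p h1 \<longleftrightarrow> (\<exists>n<p. h1 (Suc n mod p, True) = h1 (n, False))"

definition nb_cycles :: "nat \<Rightarrow> ('v, 'h) ugraph \<Rightarrow> ((nat \<Rightarrow> 'v) \<times> (nat \<times> bool \<Rightarrow> 'h)) set" where
  "nb_cycles p Y = {c \<in> p_cycles p Y. \<not> backtracking p (snd c)}"

definition cnum :: "('v, 'h) ugraph \<Rightarrow> nat \<Rightarrow> nat" where
  "cnum Y p = card (nb_cycles p Y)"

definition ihara_zeta :: "('v, 'h) ugraph \<Rightarrow> real fps" where
  "ihara_zeta Y = fps_exp 1 oo Abs_fps (\<lambda>p. if p = 0 then 0 else of_nat (cnum Y p) / of_nat p)"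

definition forest :: "('v, 'h) ugraph \<Rightarrow> bool" where
  "forest G \<longleftrightarrow> (\<forall>p\<ge>1. nb_cycles p G = {})"

definition conn :: "('v, 'h) ugraph \<Rightarrow> ('v \<times> 'v) set" where
  "conn G = {(x, y). \<exists>u\<in>harcs G. src G u = x \<and> tgt G u = y}\<^sup>*"

text \<open>R^p_X: coverings U -> X such that U contains a subgraph isomorphic to c^p_U (the image of
  an injective morphism), and removing its arcs leaves a forest each of whose trees
  (connected components) meets the cycle in exactly one node.\<close>
definition in_R :: "nat \<Rightarrow> ('x, 'xh) ugraph \<Rightarrow> ('u, 'uh) ugraph \<Rightarrow> ('u \<Rightarrow> 'x) \<Rightarrow> ('uh \<Rightarrow> 'xh) \<Rightarrow> bool" where
  "in_R p X U u0 u1 \<longleftrightarrow> wf_graph U \<and> covering U X u0 u1 \<and>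
     (\<exists>\<phi>0 \<phi>1. morphism (cyc p) U \<phi>0 \<phi>1 \<and> inj_on \<phi>0 (nodes (cyc p)) \<and> inj_on \<phi>1 (harcs (cyc p)) \<and>
        (let U' = U\<lparr>harcs := harcs U - \<phi>1 ` harcs (cyc p)\<rparr> in
           forest U' \<and> (\<forall>x\<in>nodes U. \<exists>!c. c \<in> \<phi>0 ` nodes (cyc p) \<and> (x, c) \<in> conn U')))"

definition homC :: "('u, 'uh) ugraph \<Rightarrow> ('u \<Rightarrow> 'x) \<Rightarrow> ('uh \<Rightarrow> 'xh) \<Rightarrow> ('y, 'yh) ugraph \<Rightarrow> ('y \<Rightarrow> 'x) \<Rightarrow> ('yh \<Rightarrow> 'xh)
    \<Rightarrow> (('u \<Rightarrow> 'y) \<times> ('uh \<Rightarrow> 'yh)) set" where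
  "homC U u0 u1 Y f0 f1 = {(k0, k1). k0 \<in> extensional (nodes U) \<and> k1 \<in> extensional (harcs U)
      \<and> covering U Y k0 k1 \<and> (\<forall>v\<in>nodes U. f0 (k0 v) = u0 v) \<and> (\<forall>a\<in>harcs U. f1 (k1 a) = u1 a)}"

definition compose_with :: "('u, 'uh) ugraph \<Rightarrow> ('y \<Rightarrow> 'z) \<Rightarrow> ('yh \<Rightarrow> 'zh)
    \<Rightarrow> ('u \<Rightarrow> 'y) \<times> ('uh \<Rightarrow> 'yh) \<Rightarrow> ('u \<Rightarrow> 'z) \<times> ('uh \<Rightarrow> 'zh)" where
  "compose_with U h0 h1 k = (restrict (h0 \<circ> fst k) (nodes U), restrict (h1 \<circ> snd k) (harcs U))"

definition objC :: "('x, 'xh) ugraph \<Rightarrow> ('y, 'yh) ugraph \<Rightarrow> ('y \<Rightarrow> 'x) \<Rightarrow> ('yh \<Rightarrow> 'xh) \<Rightarrow> bool" where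
  "objC X Y f0 f1 \<longleftrightarrow> wf_graph Y \<and> covering Y X f0 f1"

definition morC :: "('x, 'xh) ugraph \<Rightarrow> ('y, 'yh) ugraph \<Rightarrow> ('y \<Rightarrow> 'x) \<Rightarrow> ('yh \<Rightarrow> 'xh)
    \<Rightarrow> ('z, 'zh) ugraph \<Rightarrow> ('z \<Rightarrow> 'x) \<Rightarrow> ('zh \<Rightarrow> 'xh) \<Rightarrow> ('y \<Rightarrow> 'z) \<Rightarrow> ('yh \<Rightarrow> 'zh) \<Rightarrow> bool" where
  "morC X Y f0 f1 Z g0 g1 h0 h1 \<longleftrightarrow> covering Y Z h0 h1 \<and>
     (\<forall>v\<in>nodes Y. g0 (h0 v) = f0 v) \<and> (\<forall>a\<in>harcs Y. g1 (h1 a) = f1 a)"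

text \<open>The test objects
  U range over graphs whose nodes and half-arcs are carried by the type 'xh list; this type
  is large enough to contain an isomorphic copy of every object of R_X (these are connected
  coverings of X), and the Hom-set condition is invariant under isomorphism of U.\<close>
definition weak_equiv :: "('x, 'xh) ugraph \<Rightarrow> ('y, 'yh) ugraph \<Rightarrow> ('y \<Rightarrow> 'x) \<Rightarrow> ('yh \<Rightarrow> 'xh)
    \<Rightarrow> ('z, 'zh) ugraph \<Rightarrow> ('z \<Rightarrow> 'x) \<Rightarrow> ('zh \<Rightarrow> 'xh) \<Rightarrow> ('y \<Rightarrow> 'z) \<Rightarrow> ('yh \<Rightarrow> 'zh) \<Rightarrow> bool" where
  "weak_equiv X Y f0 f1 Z g0 g1 h0 h1 \<longleftrightarrow>
     (\<forall>p\<ge>1. \<forall>(U :: ('xh list, 'xh list) ugraph) u0 u1. in_R p X U u0 u1 \<longrightarrow>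
        bij_betw (compose_with U h0 h1) (homC U u0 u1 Y f0 f1) (homC U u0 u1 Z g0 g1))"

end

theory Submission
  imports Defs
begin

text \<open>
  A nonbacktracking \<open>p\<close>-cycle \<open>d\<close> of \<open>Z\<close> determines the unfolding \<open>U\<close> of \<open>Z\<close> along \<open>d\<close>,
  the quotient of the universal cover of \<open>Z\<close> by the loop \<open>d\<close>: its nodes are the reduced walks
  that first run some steps along \<open>d\<close> and then leave it. The cycle lifts to an embedded cycle
  of \<open>U\<close>, and what remains after removing it is a forest of trees each hanging off one cycle
  node, so \<open>U \<rightarrow> X\<close> lies in \<open>R\<^sup>p\<^sub>X\<close>. In a loopless covering \<open>G\<close> of \<open>X\<close> walks lift uniquely
  along their labels, so morphisms \<open>U \<rightarrow> G\<close> over \<open>X\<close> are determined by the image of the base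
  node and correspond exactly to the lifts of the label word of \<open>d\<close> to closed walks in \<open>G\<close>.
  Applied to \<open>Y\<close> and \<open>Z\<close>, bijectivity of composition with \<open>h\<close> on these Hom-sets says that
  every nonbacktracking \<open>p\<close>-cycle of \<open>Z\<close> has exactly one preimage under \<open>h\<close>, hence
  \<open>c\<^sub>p(Y) = c\<^sub>p(Z)\<close> for all \<open>p\<close>.
\<close>

section \<open>Walks along label words\<close>

text \<open>\<open>label_arc G l v a\<close> is only meaningful when \<open>l\<close> is injective on the half-arcs leaving \<open>v\<close>
  and one of them has label \<open>a\<close>; accordingly \<open>walk\<close> is only used on \<open>walkable\<close> words.\<close>

definition label_arc :: "('v,'h) ugraph \<Rightarrow> ('h \<Rightarrow> 'a) \<Rightarrow> 'v \<Rightarrow> 'a \<Rightarrow> 'h" where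
  "label_arc G l v a = (THE e. e \<in> harcs G \<and> src G e = v \<and> l e = a)"

definition label_step :: "('v,'h) ugraph \<Rightarrow> ('h \<Rightarrow> 'a) \<Rightarrow> 'v \<Rightarrow> 'a \<Rightarrow> 'v" where
  "label_step G l v a = tgt G (label_arc G l v a)"

definition walk :: "('v,'h) ugraph \<Rightarrow> ('h \<Rightarrow> 'a) \<Rightarrow> 'v \<Rightarrow> 'a list \<Rightarrow> 'v" where
  "walk G l v w = foldl (label_step G l) v w"

definition walkable :: "('v,'h) ugraph \<Rightarrow> ('h \<Rightarrow> 'a) \<Rightarrow> 'v \<Rightarrow> 'a list \<Rightarrow> bool" where
  "walkable G l v w = (\<forall>i<length w. \<exists>e\<in>harcs G. src G e = walk G l v (take i w) \<and> l e = w!i)"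

definition locally_injective :: "('v,'h) ugraph \<Rightarrow> ('h \<Rightarrow> 'a) \<Rightarrow> bool" where
  "locally_injective G l = (\<forall>e1\<in>harcs G. \<forall>e2\<in>harcs G. src G e1 = src G e2 \<longrightarrow> l e1 = l e2 \<longrightarrow> e1 = e2)"

lemma label_arc_eq: "locally_injective G l \<Longrightarrow> e \<in> harcs G \<Longrightarrow> src G e = v \<Longrightarrow> l e = a \<Longrightarrow> label_arc G l v a = e"
  unfolding label_arc_def locally_injective_def by (rule the_equality) auto

lemma walk_Nil[simp]: "walk G l v [] = v" by (simp add: walk_def)

lemma walk_snoc[simp]: "walk G l v (w @ [a]) = label_step G l (walk G l v w) a" by (simp add: walk_def)

lemma walkable_Nil[simp]: "walkable G l v []" by (simp add: walkable_def)

lemma walkable_snoc: "walkable G l v (w @ [a]) \<longleftrightarrow> walkable G l v w \<and> (\<exists>e\<in>harcs G. src G e = walk G l v w \<and> l e = a)"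
proof -
  have "walkable G l v (w @ [a]) \<longleftrightarrow> (\<forall>i<Suc (length w). \<exists>e\<in>harcs G. src G e = walk G l v (take i (w @ [a])) \<and> l e = (w @ [a]) ! i)"
    unfolding walkable_def by simp
  also have "\<dots> \<longleftrightarrow> (\<forall>i<length w. \<exists>e\<in>harcs G. src G e = walk G l v (take i (w @ [a])) \<and> l e = (w @ [a]) ! i)
       \<and> (\<exists>e\<in>harcs G. src G e = walk G l v (take (length w) (w @ [a])) \<and> l e = (w @ [a]) ! length w)"
    by (simp add: less_Suc_eq conj_commute all_conj_distrib)
  also have "\<dots> \<longleftrightarrow> walkable G l v w \<and> (\<exists>e\<in>harcs G. src G e = walk G l v w \<and> l e = a)"
    unfolding walkable_def by (simp add: nth_append)
  finally show ?thesis .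
qed

lemma walkable_prefix: "walkable G l v (w1 @ w2) \<Longrightarrow> walkable G l v w1"
proof (induction w2 rule: rev_induct)
  case (snoc x xs) then show ?case by (metis append_assoc walkable_snoc)
qed simp

lemma walkable_label_arc: "locally_injective G l \<Longrightarrow> walkable G l v (w @ [a]) \<Longrightarrow>
   label_arc G l (walk G l v w) a \<in> harcs G \<and> src G (label_arc G l (walk G l v w) a) = walk G l v w \<and> l (label_arc G l (walk G l v w) a) = a"
  unfolding walkable_snoc using label_arc_eq by metis

lemma walk_in_nodes: "wf_graph G \<Longrightarrow> locally_injective G l \<Longrightarrow> v \<in> nodes G \<Longrightarrow> walkable G l v w \<Longrightarrow> walk G l v w \<in> nodes G"
proof (induction w rule: rev_induct)
  case (snoc x xs)
  then have "walkable G l v xs" using walkable_prefix[of G l v xs "[x]"] by blast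
  have "label_arc G l (walk G l v xs) x \<in> harcs G" using walkable_label_arc[OF snoc(3) snoc(5)] by blast
  then show ?case using snoc(2) by (simp add: label_step_def wf_graph_def)
qed simp

lemma label_step_inv:
  assumes wf: "wf_graph G" and m: "morphism G X l0 l" and u: "locally_injective G l" and e: "e \<in> harcs G"
  shows "\<exists>e'\<in>harcs G. src G e' = tgt G e \<and> l e' = inv X (l e)"
    "label_step G l (tgt G e) (inv X (l e)) = src G e"
proof -
  have i: "inv G e \<in> harcs G" "src G (inv G e) = tgt G e" "l (inv G e) = inv X (l e)" "tgt G (inv G e) = src G e"
    using wf m e unfolding wf_graph_def morphism_def by metis+
  then show "\<exists>e'\<in>harcs G. src G e' = tgt G e \<and> l e' = inv X (l e)" by blast
  show "label_step G l (tgt G e) (inv X (l e)) = src G e"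
    unfolding label_step_def using label_arc_eq[OF u i(1) i(2) i(3)] i(4) by simp
qed

lemma walk_backtrack:
  assumes wf: "wf_graph G" and m: "morphism G X l0 l" and u: "locally_injective G l" and v: "walkable G l v (w @ [b])"
  shows "walkable G l v (w @ [b, inv X b]) \<and> walk G l v (w @ [b, inv X b]) = walk G l v w"
proof -
  let ?e = "label_arc G l (walk G l v w) b"
  have e: "?e \<in> harcs G" "src G ?e = walk G l v w" "l ?e = b" using walkable_label_arc[OF u v] by auto
  note r = label_step_inv[OF wf m u e(1)]
  have w1: "walk G l v (w @ [b]) = tgt G ?e" by (simp add: label_step_def)
  have A: "walkable G l v ((w @ [b]) @ [inv X b])"
    unfolding walkable_snoc[of G l v "w @ [b]"] using v r(1) e(3) w1 by simp
  have B: "walk G l v ((w @ [b]) @ [inv X b]) = walk G l v w"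
    unfolding walk_snoc[of G l v "w @ [b]"] w1 using r(2) e by simp
  show ?thesis using A B by simp
qed

lemma walk_end_label:
  assumes m: "morphism G X l0 l" and u: "locally_injective G l" and v: "walkable G l v w" and w: "w \<noteq> []"
  shows "l0 (walk G l v w) = tgt X (last w)"
proof -
  obtain w' b where wb: "w = w' @ [b]" using w by (metis rev_exhaust)
  let ?e = "label_arc G l (walk G l v w') b"
  have e: "?e \<in> harcs G" "src G ?e = walk G l v w'" "l ?e = b" using walkable_label_arc[OF u] v wb by auto
  then show ?thesis using m wb unfolding morphism_def by (auto simp: label_step_def)
qed

lemma walkable_label_harcs:
  assumes m: "morphism G X l0 l" and v: "walkable G l v w" and i: "i < length w"
  shows "w ! i \<in> harcs X"
proof -
  obtain e where "e \<in> harcs G" "l e = w ! i" using v i unfolding walkable_def by blast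
  then show ?thesis using m unfolding morphism_def by metis
qed

section \<open>Coverings of loopless graphs\<close>

lemma arcs_at_src: "wf_graph G \<Longrightarrow> e \<in> harcs G \<Longrightarrow> src G e = x \<Longrightarrow> {e, inv G e} \<in> arcs_at G x"
  unfolding arcs_at_def by blast

lemma arcs_at_memE:
  assumes "wf_graph G" "A \<in> arcs_at G x"
  obtains e where "e \<in> harcs G" "src G e = x" "A = {e, inv G e}"
proof -
  from assms(2) obtain u where u: "A = {u, inv G u}" "u \<in> harcs G" "src G u = x \<or> tgt G u = x"
    unfolding arcs_at_def by blast
  show ?thesis
  proof (cases "src G u = x")
    case True then show ?thesis using u that by blast
  next
    case False
    then have "tgt G u = x" using u by blast
    then show ?thesis using u assms(1) that[of "inv G u"] unfolding wf_graph_def by (metis insert_commute)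
  qed
qed

lemma covering_locally_injective:
  assumes wf: "wf_graph G" and cov: "covering G X f0 f1" and nl: "\<not> has_loop G"
  shows "locally_injective G f1"
  unfolding locally_injective_def
proof (intro ballI impI)
  fix e1 e2 assume e: "e1 \<in> harcs G" "e2 \<in> harcs G" "src G e1 = src G e2" "f1 e1 = f1 e2"
  let ?x = "src G e1"
  have m: "morphism G X f0 f1" using cov unfolding covering_def by blast
  have x: "?x \<in> nodes G" using wf e unfolding wf_graph_def by blast
  have bij: "bij_betw (\<lambda>A. f1 ` A) (arcs_at G ?x) (arcs_at X (f0 ?x))" using cov x unfolding covering_def by blast
  have A1: "{e1, inv G e1} \<in> arcs_at G ?x" using arcs_at_src[OF wf e(1)] by simp
  have A2: "{e2, inv G e2} \<in> arcs_at G ?x" using arcs_at_src[OF wf e(2)] e(3) by simp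
  have i1: "f1 (inv G e1) = inv X (f1 e1)" "f1 (inv G e2) = inv X (f1 e2)"
    using m e(1,2) unfolding morphism_def by metis+
  have "f1 ` {e1, inv G e1} = f1 ` {e2, inv G e2}" using i1 e(4) by simp
  then have "{e1, inv G e1} = {e2, inv G e2}" using inj_onD[OF bij_betw_imp_inj_on[OF bij] _ A1 A2] by blast
  then have "e1 = e2 \<or> e2 = inv G e1" by (metis doubleton_eq_iff)
  moreover have "e2 \<noteq> inv G e1"
  proof
    assume a: "e2 = inv G e1"
    have "src G (inv G e1) = tgt G e1" using e(1) wf unfolding wf_graph_def by blast
    then have "src G e1 = tgt G e1" using a e(3) by simp
    then show False using nl e(1) unfolding has_loop_def by blast
  qed
  ultimately show "e1 = e2" by blast
qed

lemma covering_lift_arc: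
  assumes wfG: "wf_graph G" and wfH: "wf_graph H" and cov: "covering G H h0 h1" and nl: "\<not> has_loop H"
    and v: "v \<in> nodes G" and e': "e' \<in> harcs H" "src H e' = h0 v"
  shows "\<exists>e\<in>harcs G. src G e = v \<and> h1 e = e'"
proof -
  have m: "morphism G H h0 h1" using cov unfolding covering_def by blast
  have bij: "bij_betw (\<lambda>A. h1 ` A) (arcs_at G v) (arcs_at H (h0 v))" using cov v unfolding covering_def by blast
  have "{e', inv H e'} \<in> arcs_at H (h0 v)" using arcs_at_src[OF wfH e'] .
  then obtain A where A: "A \<in> arcs_at G v" "h1 ` A = {e', inv H e'}" using bij unfolding bij_betw_def by (metis imageE)
  obtain e where e: "e \<in> harcs G" "src G e = v" "A = {e, inv G e}" using arcs_at_memE[OF wfG A(1)] by blast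
  have "h1 ` A = {h1 e, inv H (h1 e)}" using e m unfolding morphism_def by auto
  then have "h1 e = e' \<or> h1 e = inv H e'" using A(2) by (metis doubleton_eq_iff)
  moreover have "h1 e \<noteq> inv H e' \<or> h1 e = e'"
  proof (rule disjCI)
    assume "h1 e \<noteq> e'"
    show "h1 e \<noteq> inv H e'"
    proof
      assume "h1 e = inv H e'"
      then have "src H (inv H e') = h0 v" using m e unfolding morphism_def by metis
      then have "tgt H e' = src H e'" using wfH e' unfolding wf_graph_def by metis
      then show False using nl e'(1) unfolding has_loop_def by metis
    qed
  qed
  ultimately show ?thesis using e by blast
qed

lemma covering_if_locally_bijective:
  assumes wfA: "wf_graph A" and wfB: "wf_graph B" and m: "morphism A B f0 f1" and nl: "\<not> has_loop B"
    and lift: "\<And>v e'. v \<in> nodes A \<Longrightarrow> e' \<in> harcs B \<Longrightarrow> src B e' = f0 v \<Longrightarrow> \<exists>e\<in>harcs A. src A e = v \<and> f1 e = e'"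
    and inj: "\<And>e1 e2. e1 \<in> harcs A \<Longrightarrow> e2 \<in> harcs A \<Longrightarrow> src A e1 = src A e2 \<Longrightarrow> f1 e1 = f1 e2 \<Longrightarrow> e1 = e2"
  shows "covering A B f0 f1"
  unfolding covering_def
proof (intro conjI ballI m)
  fix v assume v: "v \<in> nodes A"
  have img: "f1 ` {e, inv A e} = {f1 e, inv B (f1 e)}" if "e \<in> harcs A" for e
    using m that unfolding morphism_def by auto
  show "bij_betw (\<lambda>S. f1 ` S) (arcs_at A v) (arcs_at B (f0 v))"
    unfolding bij_betw_def
  proof (intro conjI)
    show "inj_on (\<lambda>S. f1 ` S) (arcs_at A v)"
    proof (rule inj_onI)
      fix S1 S2 assume S: "S1 \<in> arcs_at A v" "S2 \<in> arcs_at A v" "f1 ` S1 = f1 ` S2"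
      obtain e1 where e1: "e1 \<in> harcs A" "src A e1 = v" "S1 = {e1, inv A e1}" using arcs_at_memE[OF wfA S(1)] by blast
      obtain e2 where e2: "e2 \<in> harcs A" "src A e2 = v" "S2 = {e2, inv A e2}" using arcs_at_memE[OF wfA S(2)] by blast
      have "{f1 e1, inv B (f1 e1)} = {f1 e2, inv B (f1 e2)}" using S(3) e1 e2 img by simp
      then have "f1 e1 = f1 e2 \<or> f1 e2 = inv B (f1 e1)" by (metis doubleton_eq_iff)
      moreover have "f1 e2 \<noteq> inv B (f1 e1)"
      proof
        assume a: "f1 e2 = inv B (f1 e1)"
        have h: "f1 e1 \<in> harcs B" "src B (f1 e1) = f0 v" "src B (f1 e2) = f0 v"
          using m e1 e2 unfolding morphism_def by auto
        then have "tgt B (f1 e1) = src B (f1 e1)" using wfB a unfolding wf_graph_def by metis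
        then show False using nl h(1) unfolding has_loop_def by metis
      qed
      ultimately have "e1 = e2" using inj e1 e2 by metis
      then show "S1 = S2" using e1 e2 by simp
    qed
    show "(\<lambda>S. f1 ` S) ` arcs_at A v = arcs_at B (f0 v)"
    proof (intro equalityI subsetI)
      fix T assume "T \<in> (\<lambda>S. f1 ` S) ` arcs_at A v"
      then obtain S where S: "S \<in> arcs_at A v" "T = f1 ` S" by blast
      obtain e where e: "e \<in> harcs A" "src A e = v" "S = {e, inv A e}" using arcs_at_memE[OF wfA S(1)] by blast
      have "f1 e \<in> harcs B" "src B (f1 e) = f0 v" using m e unfolding morphism_def by auto
      then show "T \<in> arcs_at B (f0 v)" using S e img arcs_at_src[OF wfB] by simp
    next
      fix T assume T: "T \<in> arcs_at B (f0 v)"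
      obtain e' where e': "e' \<in> harcs B" "src B e' = f0 v" "T = {e', inv B e'}" using arcs_at_memE[OF wfB T] by blast
      obtain e where e: "e \<in> harcs A" "src A e = v" "f1 e = e'" using lift[OF v e'(1,2)] by blast
      have "{e, inv A e} \<in> arcs_at A v" using arcs_at_src[OF wfA e(1,2)] .
      moreover have "T = f1 ` {e, inv A e}" using img[OF e(1)] e e' by simp
      ultimately show "T \<in> (\<lambda>S. f1 ` S) ` arcs_at A v" by blast
    qed
  qed
qed

lemma morphism_comp:
  assumes wfA: "wf_graph A" and m1: "morphism A B f0 f1" and m2: "morphism B C g0 g1"
  shows "morphism A C (restrict (g0 \<circ> f0) (nodes A)) (restrict (g1 \<circ> f1) (harcs A))"
  unfolding morphism_def
proof (intro conjI ballI)
  fix v assume "v \<in> nodes A" then show "restrict (g0 \<circ> f0) (nodes A) v \<in> nodes C"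
    using m1 m2 unfolding morphism_def by auto
next
  fix u assume u: "u \<in> harcs A"
  have s: "src A u \<in> nodes A" "tgt A u \<in> nodes A" "inv A u \<in> harcs A" using wfA u unfolding wf_graph_def by auto
  show "restrict (g1 \<circ> f1) (harcs A) u \<in> harcs C"
    "src C (restrict (g1 \<circ> f1) (harcs A) u) = restrict (g0 \<circ> f0) (nodes A) (src A u)"
    "tgt C (restrict (g1 \<circ> f1) (harcs A) u) = restrict (g0 \<circ> f0) (nodes A) (tgt A u)"
    "inv C (restrict (g1 \<circ> f1) (harcs A) u) = restrict (g1 \<circ> f1) (harcs A) (inv A u)"
    using m1 m2 u s unfolding morphism_def by auto
qed

lemma covering_comp:
  assumes wfA: "wf_graph A" and c1: "covering A B f0 f1" and c2: "covering B C g0 g1"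
    and e0: "\<And>v. v \<in> nodes A \<Longrightarrow> k0 v = g0 (f0 v)" and e1: "\<And>e. e \<in> harcs A \<Longrightarrow> k1 e = g1 (f1 e)"
  shows "covering A C k0 k1"
proof -
  have m1: "morphism A B f0 f1" and m2: "morphism B C g0 g1" using c1 c2 unfolding covering_def by auto
  have m: "morphism A C k0 k1"
    unfolding morphism_def
  proof (intro conjI ballI)
    fix v assume "v \<in> nodes A" then show "k0 v \<in> nodes C" using m1 m2 e0 unfolding morphism_def by auto
  next
    fix u assume u: "u \<in> harcs A"
    have s: "src A u \<in> nodes A" "tgt A u \<in> nodes A" "inv A u \<in> harcs A" using wfA u unfolding wf_graph_def by auto
    show "k1 u \<in> harcs C" "src C (k1 u) = k0 (src A u)" "tgt C (k1 u) = k0 (tgt A u)" "inv C (k1 u) = k1 (inv A u)"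
      using m1 m2 u s e0 e1 unfolding morphism_def by auto
  qed
  show ?thesis unfolding covering_def
  proof (intro conjI ballI m)
    fix v assume v: "v \<in> nodes A"
    have b1: "bij_betw (\<lambda>S. f1 ` S) (arcs_at A v) (arcs_at B (f0 v))" using c1 v unfolding covering_def by blast
    have "f0 v \<in> nodes B" using m1 v unfolding morphism_def by blast
    then have b2: "bij_betw (\<lambda>S. g1 ` S) (arcs_at B (f0 v)) (arcs_at C (g0 (f0 v)))" using c2 unfolding covering_def by blast
    have b: "bij_betw ((\<lambda>S. g1 ` S) \<circ> (\<lambda>S. f1 ` S)) (arcs_at A v) (arcs_at C (g0 (f0 v)))"
      using bij_betw_trans[OF b1 b2] .
    have sub: "S \<subseteq> harcs A" if "S \<in> arcs_at A v" for S
      using that wfA unfolding arcs_at_def wf_graph_def by auto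
    have "bij_betw (\<lambda>S. k1 ` S) (arcs_at A v) (arcs_at C (g0 (f0 v)))"
      apply (rule bij_betw_cong[THEN iffD1, OF _ b])
      using sub e1 by (force simp: image_image)
    then show "bij_betw (\<lambda>S. k1 ` S) (arcs_at A v) (arcs_at C (k0 v))" using e0 v by simp
  qed
qed

lemma covering_walk_lift:
  assumes wfY: "wf_graph Y" and wfZ: "wf_graph Z" and covh: "covering Y Z h0 h1" and nlZ: "\<not> has_loop Z"
    and uY: "locally_injective Y f1" and uZ: "locally_injective Z g1" and lab: "\<And>e. e \<in> harcs Y \<Longrightarrow> g1 (h1 e) = f1 e"
    and v: "v \<in> nodes Y"
  shows "(walkable Y f1 v w \<longleftrightarrow> walkable Z g1 (h0 v) w) \<and>
     (walkable Y f1 v w \<longrightarrow> h0 (walk Y f1 v w) = walk Z g1 (h0 v) w \<and> walk Y f1 v w \<in> nodes Y)"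
proof (induction w rule: rev_induct)
  case Nil then show ?case using v by simp
next
  case (snoc a w)
  have mh: "morphism Y Z h0 h1" using covh unfolding covering_def by blast
  show ?case
  proof (cases "walkable Y f1 v w")
    case False
    then have "\<not> walkable Z g1 (h0 v) w" using snoc.IH by blast
    then show ?thesis using False walkable_prefix[of Y f1 v w "[a]"] walkable_prefix[of Z g1 "h0 v" w "[a]"] by blast
  next
    case True
    let ?y = "walk Y f1 v w"
    have y: "h0 ?y = walk Z g1 (h0 v) w" "?y \<in> nodes Y" and vz: "walkable Z g1 (h0 v) w" using snoc.IH True by auto
    have eqv: "(\<exists>e\<in>harcs Y. src Y e = ?y \<and> f1 e = a) \<longleftrightarrow> (\<exists>e'\<in>harcs Z. src Z e' = h0 ?y \<and> g1 e' = a)"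
    proof
      assume "\<exists>e\<in>harcs Y. src Y e = ?y \<and> f1 e = a"
      then obtain e where e: "e \<in> harcs Y" "src Y e = ?y" "f1 e = a" by blast
      then show "\<exists>e'\<in>harcs Z. src Z e' = h0 ?y \<and> g1 e' = a" using mh lab[OF e(1)] unfolding morphism_def by metis
    next
      assume "\<exists>e'\<in>harcs Z. src Z e' = h0 ?y \<and> g1 e' = a"
      then obtain e' where e': "e' \<in> harcs Z" "src Z e' = h0 ?y" "g1 e' = a" by blast
      obtain e where e: "e \<in> harcs Y" "src Y e = ?y" "h1 e = e'" using covering_lift_arc[OF wfY wfZ covh nlZ y(2) e'(1,2)] by blast
      then show "\<exists>e\<in>harcs Y. src Y e = ?y \<and> f1 e = a" using lab[OF e(1)] e'(3) by metis
    qed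
    have iff: "walkable Y f1 v (w @ [a]) \<longleftrightarrow> walkable Z g1 (h0 v) (w @ [a])"
      unfolding walkable_snoc using True vz eqv y(1) by simp
    have rest: "h0 (walk Y f1 v (w @ [a])) = walk Z g1 (h0 v) (w @ [a]) \<and> walk Y f1 v (w @ [a]) \<in> nodes Y"
      if vv: "walkable Y f1 v (w @ [a])"
    proof -
      let ?e = "label_arc Y f1 ?y a"
      have e: "?e \<in> harcs Y" "src Y ?e = ?y" "f1 ?e = a" using walkable_label_arc[OF uY vv] by auto
      have e': "h1 ?e \<in> harcs Z" "src Z (h1 ?e) = h0 ?y" "g1 (h1 ?e) = a" "tgt Z (h1 ?e) = h0 (tgt Y ?e)"
        using mh e lab[OF e(1)] unfolding morphism_def by auto
      have "label_arc Z g1 (h0 ?y) a = h1 ?e" using label_arc_eq[OF uZ e'(1,2,3)] .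
      then have "h0 (walk Y f1 v (w @ [a])) = walk Z g1 (h0 v) (w @ [a])"
        using e'(4) y(1) by (simp add: label_step_def)
      moreover have "walk Y f1 v (w @ [a]) \<in> nodes Y" using wfY e(1) unfolding wf_graph_def by (simp add: label_step_def)
      ultimately show ?thesis ..
    qed
    show ?thesis using iff rest by blast
  qed
qed

lemma homC_compose:
  assumes wfU: "wf_graph U" and k: "k \<in> homC U u0 u1 Y f0 f1" and h: "morC X Y f0 f1 Z g0 g1 h0 h1"
  shows "compose_with U h0 h1 k \<in> homC U u0 u1 Z g0 g1"
proof -
  obtain k0 k1 where kk: "k = (k0, k1)" by (cases k)
  have ck: "covering U Y k0 k1" and l0: "\<And>v. v \<in> nodes U \<Longrightarrow> f0 (k0 v) = u0 v"
    and l1: "\<And>a. a \<in> harcs U \<Longrightarrow> f1 (k1 a) = u1 a"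
    using k kk unfolding homC_def by auto
  have mk: "morphism U Y k0 k1" using ck unfolding covering_def by blast
  have ch: "covering Y Z h0 h1" and h0: "\<And>v. v \<in> nodes Y \<Longrightarrow> g0 (h0 v) = f0 v"
    and h1: "\<And>a. a \<in> harcs Y \<Longrightarrow> g1 (h1 a) = f1 a"
    using h unfolding morC_def by auto
  have "covering U Z (restrict (h0 \<circ> k0) (nodes U)) (restrict (h1 \<circ> k1) (harcs U))"
    by (rule covering_comp[OF wfU ck ch]) auto
  moreover have "g0 (h0 (k0 v)) = u0 v" if "v \<in> nodes U" for v
    using that mk h0 l0 unfolding morphism_def by auto
  moreover have "g1 (h1 (k1 a)) = u1 a" if "a \<in> harcs U" for a
    using that mk h1 l1 unfolding morphism_def by auto
  ultimately show ?thesis unfolding kk homC_def compose_with_def by auto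
qed

section \<open>Cycles\<close>

lemma cyc_simps[simp]: "nodes (cyc p) = {0..<p}" "harcs (cyc p) = {0..<p} \<times> UNIV"
  "src (cyc p) (n, b) = (if b then n else Suc n mod p)"
  "tgt (cyc p) (n, b) = (if b then Suc n mod p else n)"
  "inv (cyc p) (n, b) = (n, \<not> b)"
  by (simp_all add: cyc_def)

lemma wf_cyc: "wf_graph (cyc p)"
  unfolding wf_graph_def by auto

lemma Suc_pred_mod: "n < q \<Longrightarrow> Suc ((n + q - 1) mod q) mod (q::nat) = n"
  by (cases n) (simp_all add: mod_if)

lemma pred_Suc_mod: "n < q \<Longrightarrow> (Suc n mod q + q - 1) mod (q::nat) = n"
  by (cases "Suc n < q") (simp_all add: mod_if)

lemma cycle_walk:
  assumes u: "locally_injective G l" and m: "morphism (cyc p) G c0 c1" and lV: "length V = p"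
    and lab: "\<And>i. i < p \<Longrightarrow> l (c1 (i, True)) = V ! i"
  shows "n \<le> p \<Longrightarrow> walkable G l (c0 0) (take n V) \<and> walk G l (c0 0) (take n V) = c0 (n mod p)"
proof (induction n)
  case 0 then show ?case by simp
next
  case (Suc n)
  then have IH: "walkable G l (c0 0) (take n V)" "walk G l (c0 0) (take n V) = c0 n" by auto
  have np: "n < p" using Suc by simp
  have tk: "take (Suc n) V = take n V @ [V ! n]" using np lV by (simp add: take_Suc_conv_app_nth)
  have e: "c1 (n, True) \<in> harcs G" "src G (c1 (n, True)) = c0 n" "tgt G (c1 (n, True)) = c0 (Suc n mod p)"
    using m np unfolding morphism_def by auto
  have label_arc: "label_arc G l (c0 n) (V ! n) = c1 (n, True)" using label_arc_eq[OF u e(1) e(2)] lab np by simp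
  show ?case unfolding tk using IH e lab np
    by (auto simp: walkable_snoc label_step_def label_arc)
qed

lemma cycle_eqI:
  assumes wfG: "wf_graph G" and uG: "locally_injective G l" and p1: "p \<ge> 1" and lV: "length V = p"
    and c: "(c0, c1) \<in> p_cycles p G" and lab: "\<And>i. i < p \<Longrightarrow> l (c1 (i, True)) = V ! i"
    and c': "(c0', c1') \<in> p_cycles p G" and lab': "\<And>i. i < p \<Longrightarrow> l (c1' (i, True)) = V ! i"
    and st: "c0 0 = c0' 0"
  shows "(c0, c1) = (c0', c1')"
proof -
  have m: "morphism (cyc p) G c0 c1" and m': "morphism (cyc p) G c0' c1'"
    and ex: "c0 \<in> extensional {0..<p}" "c1 \<in> extensional ({0..<p} \<times> UNIV)"
    "c0' \<in> extensional {0..<p}" "c1' \<in> extensional ({0..<p} \<times> UNIV)"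
    using c c' unfolding p_cycles_def by auto
  have n0: "c0 n = c0' n" if n: "n < p" for n
  proof -
    have "walk G l (c0 0) (take n V) = c0 n" using cycle_walk[OF uG m lV lab, of n] n by simp
    moreover have "walk G l (c0' 0) (take n V) = c0' n" using cycle_walk[OF uG m' lV lab', of n] n by simp
    ultimately show ?thesis using st by simp
  qed
  have mu: "\<forall>u\<in>harcs (cyc p). c1 u \<in> harcs G \<and> src G (c1 u) = c0 (src (cyc p) u) \<and> inv G (c1 u) = c1 (inv (cyc p) u)"
    using m unfolding morphism_def by blast
  have mu': "\<forall>u\<in>harcs (cyc p). c1' u \<in> harcs G \<and> src G (c1' u) = c0' (src (cyc p) u) \<and> inv G (c1' u) = c1' (inv (cyc p) u)"
    using m' unfolding morphism_def by blast
  have nT: "c1 (n, True) = c1' (n, True)" if n: "n < p" for n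
  proof -
    have a: "(n, True) \<in> harcs (cyc p)" using n by simp
    have "label_arc G l (c0 n) (V ! n) = c1 (n, True)" using label_arc_eq[OF uG] mu[rule_format, OF a] lab[OF n] by simp
    moreover have "label_arc G l (c0' n) (V ! n) = c1' (n, True)" using label_arc_eq[OF uG] mu'[rule_format, OF a] lab'[OF n] by simp
    ultimately show ?thesis using n0[OF n] by simp
  qed
  have n1: "c1 u = c1' u" if u: "u \<in> {0..<p} \<times> UNIV" for u
  proof -
    obtain n b where ub: "u = (n, b)" "n < p" using u by auto
    show ?thesis
    proof (cases b)
      case True then show ?thesis using nT ub by simp
    next
      case False
      have a: "(n, True) \<in> harcs (cyc p)" using ub by simp
      have "c1 (n, False) = inv G (c1 (n, True))" using mu[rule_format, OF a] by simp
      moreover have "c1' (n, False) = inv G (c1' (n, True))" using mu'[rule_format, OF a] by simp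
      ultimately show ?thesis using nT[OF ub(2)] ub False by simp
    qed
  qed
  have "c0 = c0'" using n0 ex(1,3) by (intro extensionalityI) auto
  moreover have "c1 = c1'" using n1 ex(2,4) by (intro extensionalityI) auto
  ultimately show ?thesis by simp
qed

lemma backtracking_compose:
  assumes "backtracking p c1"
  shows "backtracking p (snd (compose_with (cyc p) h0 h1 (c0, c1)))"
proof -
  obtain n where n: "n < p" "c1 (Suc n mod p, True) = c1 (n, False)"
    using assms unfolding backtracking_def by blast
  then have "Suc n mod p < p" by simp
  then show ?thesis using n unfolding backtracking_def compose_with_def by (auto intro!: exI[of _ n])
qed

lemma nb_cycles_compose:
  assumes wfY: "wf_graph Y" and covh: "covering Y Z h0 h1" and nlY: "\<not> has_loop Y"
    and c: "c \<in> nb_cycles p Y"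
  shows "compose_with (cyc p) h0 h1 c \<in> nb_cycles p Z"
proof -
  obtain c0 c1 where cc: "c = (c0, c1)" by (cases c)
  have m: "morphism (cyc p) Y c0 c1" and nb: "\<not> backtracking p c1"
    using c cc unfolding nb_cycles_def p_cycles_def by auto
  have mh: "morphism Y Z h0 h1" using covh unfolding covering_def by blast
  have uh: "locally_injective Y h1" using covering_locally_injective[OF wfY covh nlY] .
  have "\<not> backtracking p (restrict (h1 \<circ> c1) (harcs (cyc p)))"
  proof
    assume "backtracking p (restrict (h1 \<circ> c1) (harcs (cyc p)))"
    then obtain n where n: "n < p"
      and eq: "h1 (c1 (Suc n mod p, True)) = h1 (c1 (n, False))"
      unfolding backtracking_def by auto
    have "(Suc n mod p, True) \<in> harcs (cyc p)" "(n, False) \<in> harcs (cyc p)" using n by auto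
    then have "c1 (Suc n mod p, True) \<in> harcs Y" "c1 (n, False) \<in> harcs Y"
      "src Y (c1 (Suc n mod p, True)) = src Y (c1 (n, False))"
      using m unfolding morphism_def by auto
    then have "c1 (Suc n mod p, True) = c1 (n, False)"
      using uh eq unfolding locally_injective_def by blast
    then show False using nb n unfolding backtracking_def by blast
  qed
  then show ?thesis
    using morphism_comp[OF wf_cyc m mh] unfolding cc nb_cycles_def p_cycles_def compose_with_def by auto
qed

section \<open>The unfolding of a graph along a nonbacktracking cycle\<close>

locale nb_cycle =
  fixes X :: "('x, 'xh) ugraph" and Z :: "('z, 'zh) ugraph" and g0 :: "'z \<Rightarrow> 'x" and g1 :: "'zh \<Rightarrow> 'xh"
    and p :: nat and d0 :: "nat \<Rightarrow> 'z" and d1 :: "nat \<times> bool \<Rightarrow> 'zh"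
  assumes wfX: "wf_graph X" and objZ: "objC X Z g0 g1" and nlZ: "\<not> has_loop Z" and p1: "p \<ge> 1"
    and dcyc: "(d0, d1) \<in> nb_cycles p Z"
begin

text \<open>A node of the unfolding is a pair \<open>(n, w)\<close> with \<open>n < p\<close>: go \<open>n\<close> steps along \<open>d\<close> from its
  base node, then follow the reduced label word \<open>w\<close>, whose first letter leaves the cycle in
  both directions. It is represented by its full label word \<open>take n cword @ w\<close>, and a half-arc
  by its source followed by its label, so that nodes and half-arcs have the type \<open>'xh list\<close>
  over which \<open>weak_equiv\<close> quantifies. Cycle positions are taken mod \<open>p\<close>, with \<open>n + p - 1\<close>
  standing for \<open>n - 1\<close>.\<close>

definition "cword = map (\<lambda>i. g1 (d1 (i, True))) [0..<p]"

definition "clabel n = g1 (d1 (n mod p, True))"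

definition "base = d0 0"

definition reduced :: "'xh list \<Rightarrow> bool" where
  "reduced w = (\<forall>i. Suc i < length w \<longrightarrow> w ! Suc i \<noteq> inv X (w ! i))"

definition normal :: "nat \<Rightarrow> 'xh list \<Rightarrow> bool" where
  "normal n w = (n < p \<and> walkable Z g1 base (take n cword @ w) \<and> reduced w \<and>
      (w \<noteq> [] \<longrightarrow> hd w \<noteq> clabel n \<and> hd w \<noteq> inv X (clabel (n + p - 1))))"

definition encode :: "nat \<times> 'xh list \<Rightarrow> 'xh list" where "encode = (\<lambda>(n, w). take n cword @ w)"

definition "normals = {(n, w). normal n w}"

definition "unf_nodes = encode ` normals"

definition "decode = the_inv_into normals encode"

definition "unf_harcs = {L @ [a] | L a. L \<in> unf_nodes \<and> walkable Z g1 base (L @ [a])}"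

definition ustep :: "'xh list \<Rightarrow> 'xh \<Rightarrow> 'xh list" where
  "ustep L a = (case decode L of (n, w) \<Rightarrow>
     if w \<noteq> [] \<and> a = inv X (last w) then encode (n, butlast w)
     else if w = [] \<and> a = clabel n then encode (Suc n mod p, [])
     else if w = [] \<and> a = inv X (clabel (n + p - 1)) then encode ((n + p - 1) mod p, [])
     else encode (n, w @ [a]))"

definition "unf = \<lparr>nodes = unf_nodes, harcs = unf_harcs, src = butlast, tgt = (\<lambda>e. ustep (butlast e) (last e)),
   inv = (\<lambda>e. ustep (butlast e) (last e) @ [inv X (last e)])\<rparr>"

definition "unf_proj L = g0 (walk Z g1 base L)"

definition "cyc_emb0 n = take n cword"

definition "cyc_emb1 = (\<lambda>(n, b). if b then take n cword @ [cword ! n] else take (Suc n mod p) cword @ [inv X (cword ! n)])"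

definition "walk_hom G l v0 = (restrict (walk G l v0) unf_nodes, restrict (\<lambda>e. label_arc G l (walk G l v0 (butlast e)) (last e)) unf_harcs)"

lemma wfZ: "wf_graph Z" and covZ: "covering Z X g0 g1" and mZ: "morphism Z X g0 g1"
  using objZ unfolding objC_def covering_def by auto

lemma uZ: "locally_injective Z g1" using covering_locally_injective[OF wfZ covZ nlZ] .

lemma d_morphism: "morphism (cyc p) Z d0 d1" using dcyc unfolding nb_cycles_def p_cycles_def by auto

lemma d_no_backtrack: "\<not> backtracking p d1" using dcyc unfolding nb_cycles_def by auto

lemma length_cword[simp]: "length cword = p" by (simp add: cword_def)

lemma nth_cword: "i < p \<Longrightarrow> cword ! i = g1 (d1 (i, True))" by (simp add: cword_def)

lemma clabel_eq: "clabel n = cword ! (n mod p)" using p1 by (simp add: clabel_def nth_cword)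

lemma clabel_less: "n < p \<Longrightarrow> clabel n = cword ! n" by (simp add: clabel_eq)

lemma cword_walk: "n \<le> p \<Longrightarrow> walkable Z g1 base (take n cword) \<and> walk Z g1 base (take n cword) = d0 (n mod p)"
  unfolding base_def by (rule cycle_walk[OF uZ d_morphism length_cword nth_cword[symmetric]])

lemma d1_arcs: "n < p \<Longrightarrow> d1 (n, True) \<in> harcs Z \<and> src Z (d1 (n, True)) = d0 n \<and> tgt Z (d1 (n, True)) = d0 (Suc n mod p)
   \<and> d1 (n, False) = inv Z (d1 (n, True)) \<and> d1 (n, False) \<in> harcs Z \<and> src Z (d1 (n, False)) = d0 (Suc n mod p)"
proof -
  assume n: "n < p"
  have h: "\<forall>u\<in>harcs (cyc p). d1 u \<in> harcs Z \<and> src Z (d1 u) = d0 (src (cyc p) u)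
        \<and> tgt Z (d1 u) = d0 (tgt (cyc p) u) \<and> inv Z (d1 u) = d1 (inv (cyc p) u)"
    using d_morphism unfolding morphism_def by blast
  have a: "(n, True) \<in> harcs (cyc p)" "(n, False) \<in> harcs (cyc p)" using n by auto
  show ?thesis using h[rule_format, OF a(1)] h[rule_format, OF a(2)] by simp
qed

lemma cword_harcs: assumes n: "n < p" shows "cword ! n \<in> harcs X"
proof -
  have e: "d1 (n, True) \<in> harcs Z" using d1_arcs[OF n] by simp
  have "g1 (d1 (n, True)) \<in> harcs X" using mZ e unfolding morphism_def by blast
  then show ?thesis using nth_cword[OF n] by simp
qed

lemma inv_inv_cword: "n < p \<Longrightarrow> inv X (inv X (cword ! n)) = cword ! n"
  using cword_harcs wfX unfolding wf_graph_def by auto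

lemma d1_backward_label: "n < p \<Longrightarrow> g1 (d1 (n, False)) = inv X (cword ! n)"
proof -
  assume n: "n < p"
  note A = d1_arcs[OF n]
  have e: "d1 (n, True) \<in> harcs Z" using A by simp
  have "inv X (g1 (d1 (n, True))) = g1 (inv Z (d1 (n, True)))" using mZ e unfolding morphism_def by blast
  then show ?thesis using A nth_cword[OF n] by simp
qed

lemma cword_no_backtrack: "n < p \<Longrightarrow> cword ! (Suc n mod p) \<noteq> inv X (cword ! n)"
proof
  assume n: "n < p" and eq: "cword ! (Suc n mod p) = inv X (cword ! n)"
  have m: "Suc n mod p < p" using p1 by simp
  note A = d1_arcs[OF n] and B = d1_arcs[OF m]
  have g: "g1 (d1 (n, False)) = inv X (cword ! n)" using d1_backward_label[OF n] .
  have h1: "label_arc Z g1 (d0 (Suc n mod p)) (cword ! (Suc n mod p)) = d1 (Suc n mod p, True)"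
    by (rule label_arc_eq[OF uZ]) (use B nth_cword[OF m] in auto)
  have h2: "label_arc Z g1 (d0 (Suc n mod p)) (cword ! (Suc n mod p)) = d1 (n, False)"
    by (rule label_arc_eq[OF uZ]) (use A g eq in auto)
  have "d1 (Suc n mod p, True) = d1 (n, False)" using h1 h2 by simp
  then show False using d_no_backtrack n unfolding backtracking_def by blast
qed

lemma normal_index: "normal n w \<Longrightarrow> n < p" by (simp add: normal_def)

lemma take_less_hd:
  assumes "n < m" "m \<le> p" "take n cword @ w = take m cword @ w'"
  shows "w \<noteq> [] \<and> hd w = cword ! n"
proof -
  have "take m cword = take n cword @ take (m - n) (drop n cword)" using assms(1)
    by (metis add_diff_inverse_nat not_less_iff_gr_or_eq take_add)
  moreover have "take (m - n) (drop n cword) = cword ! n # take (m - n - 1) (drop (Suc n) cword)"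
  proof -
    have "n < length cword" using assms(1,2) by simp
    then have "drop n cword = cword ! n # drop (Suc n) cword" by (rule Cons_nth_drop_Suc[symmetric])
    moreover have "m - n = Suc (m - n - 1)" using assms(1) by simp
    ultimately show ?thesis by (metis take_Suc_Cons)
  qed
  ultimately have "w = cword ! n # take (m - n - 1) (drop (Suc n) cword) @ w'" using assms(3) by simp
  then show ?thesis by simp
qed

lemma encode_inj: "inj_on encode normals"
proof (rule inj_onI)
  fix s t assume s: "s \<in> normals" and t: "t \<in> normals" and e: "encode s = encode t"
  obtain n w where sn: "s = (n, w)" by (cases s)
  obtain m w' where tm: "t = (m, w')" by (cases t)
  have on: "normal n w" "normal m w'" using s t sn tm unfolding normals_def by auto
  have eq: "take n cword @ w = take m cword @ w'" using e sn tm unfolding encode_def by simp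
  have "n = m"
  proof (rule ccontr)
    assume "n \<noteq> m"
    then consider "n < m" | "m < n" by linarith
    then show False
    proof cases
      case 1
      have "m < p" using on(2) normal_index by blast
      then have "w \<noteq> [] \<and> hd w = cword ! n" using take_less_hd[OF 1 _ eq] by simp
      then show False using on(1) clabel_less[of n] 1 \<open>m < p\<close> unfolding normal_def by simp
    next
      case 2
      have "n < p" using on(1) normal_index by blast
      then have "w' \<noteq> [] \<and> hd w' = cword ! m" using take_less_hd[OF 2 _ eq[symmetric]] by simp
      then show False using on(2) clabel_less[of m] 2 \<open>n < p\<close> unfolding normal_def by simp
    qed
  qed
  then show "s = t" using eq sn tm by simp
qed

lemma decode_encode: "normal n w \<Longrightarrow> decode (encode (n, w)) = (n, w)"
  unfolding decode_def by (rule the_inv_into_f_f[OF encode_inj]) (simp add: normals_def)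

lemma unf_nodes_iff: "L \<in> unf_nodes \<longleftrightarrow> (\<exists>n w. normal n w \<and> L = encode (n, w))"
  unfolding unf_nodes_def normals_def by auto

lemma encode_eq: "encode (n, w) = take n cword @ w" by (simp add: encode_def)

lemma normal_walkable: "normal n w \<Longrightarrow> walkable Z g1 base (take n cword @ w)" by (simp add: normal_def)

lemma normal_Nil: "n < p \<Longrightarrow> normal n []"
  unfolding normal_def reduced_def using cword_walk[of n] by simp

lemma cword_prefix_in_nodes: "n < p \<Longrightarrow> take n cword \<in> unf_nodes"
  using normal_Nil unf_nodes_iff encode_eq by (metis append_Nil2)

lemma reduced_take: assumes "reduced w" shows "reduced (take j w)"
  unfolding reduced_def
proof (intro allI impI)
  fix i assume i: "Suc i < length (take j w)"
  then have "Suc i < length w" "Suc i < j" by auto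
  then show "take j w ! Suc i \<noteq> inv X (take j w ! i)" using assms unfolding reduced_def by simp
qed

lemma reduced_butlast: "reduced w \<Longrightarrow> reduced (butlast w)"
  by (simp add: butlast_conv_take reduced_take)

lemma reduced_snoc: assumes r: "reduced w" and a: "w \<noteq> [] \<Longrightarrow> a \<noteq> inv X (last w)" shows "reduced (w @ [a])"
  unfolding reduced_def
proof (intro allI impI)
  fix i assume i: "Suc i < length (w @ [a])"
  show "(w @ [a]) ! Suc i \<noteq> inv X ((w @ [a]) ! i)"
  proof (cases "Suc i < length w")
    case True then show ?thesis using r unfolding reduced_def by (simp add: nth_append)
  next
    case False
    then have "Suc i = length w" using i by simp
    then have "w \<noteq> []" "(w @ [a]) ! Suc i = a" by auto
    moreover have "(w @ [a]) ! i = last w"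
    proof -
      have "i < length w" "length w - 1 = i" using \<open>Suc i = length w\<close> by simp_all
      then show ?thesis using \<open>w \<noteq> []\<close> by (simp add: nth_append last_conv_nth)
    qed
    ultimately show ?thesis using a by simp
  qed
qed

lemma normal_butlast:
  assumes nf: "normal n (w' @ [b])" shows "normal n w'"
proof -
  have o: "n < p" "walkable Z g1 base (take n cword @ w' @ [b])" "reduced (w' @ [b])"
     "w' @ [b] \<noteq> [] \<longrightarrow> hd (w' @ [b]) \<noteq> clabel n \<and> hd (w' @ [b]) \<noteq> inv X (clabel (n + p - 1))"
    using nf unfolding normal_def by auto
  have "walkable Z g1 base (take n cword @ w')" using walkable_prefix[of Z g1 base "take n cword @ w'" "[b]"] o(2) by simp
  moreover have "reduced w'" using reduced_butlast[OF o(3)] by simp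
  moreover have "w' \<noteq> [] \<longrightarrow> hd w' \<noteq> clabel n \<and> hd w' \<noteq> inv X (clabel (n + p - 1))" using o(4) by (cases w') auto
  ultimately show "normal n w'" using o(1) unfolding normal_def by blast
qed

lemma normal_snoc:
  assumes nf: "normal n w" and v: "walkable Z g1 base (take n cword @ w @ [a])"
    and no_retract: "w \<noteq> [] \<Longrightarrow> a \<noteq> inv X (last w)" and off_cycle: "w = [] \<Longrightarrow> a \<noteq> clabel n \<and> a \<noteq> inv X (clabel (n + p - 1))"
  shows "normal n (w @ [a])"
proof -
  have o: "n < p" "reduced w" "w \<noteq> [] \<longrightarrow> hd w \<noteq> clabel n \<and> hd w \<noteq> inv X (clabel (n + p - 1))"
    using nf unfolding normal_def by auto
  have "reduced (w @ [a])" using reduced_snoc[OF o(2) no_retract] by blast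
  moreover have "hd (w @ [a]) \<noteq> clabel n \<and> hd (w @ [a]) \<noteq> inv X (clabel (n + p - 1))"
    using o(3) off_cycle by (cases w) auto
  ultimately show "normal n (w @ [a])" using o(1) v unfolding normal_def by simp
qed

lemma ustep_cases:
  assumes "normal n w"
  obtains (retract) w' b where "w = w' @ [b]" "a = inv X b" "ustep (encode (n, w)) a = encode (n, w')"
  | (forward) "w = []" "a = clabel n" "ustep (encode (n, w)) a = encode (Suc n mod p, [])"
  | (backward) "w = []" "a \<noteq> clabel n" "a = inv X (clabel (n + p - 1))" "ustep (encode (n, w)) a = encode ((n + p - 1) mod p, [])"
  | (extend) "w \<noteq> [] \<Longrightarrow> a \<noteq> inv X (last w)" "w = [] \<Longrightarrow> a \<noteq> clabel n \<and> a \<noteq> inv X (clabel (n + p - 1))"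
         "ustep (encode (n, w)) a = encode (n, w @ [a])"
proof -
  have sd: "ustep (encode (n, w)) a = (if w \<noteq> [] \<and> a = inv X (last w) then encode (n, butlast w)
     else if w = [] \<and> a = clabel n then encode (Suc n mod p, [])
     else if w = [] \<and> a = inv X (clabel (n + p - 1)) then encode ((n + p - 1) mod p, [])
     else encode (n, w @ [a]))" unfolding ustep_def decode_encode[OF assms] by simp
  show ?thesis
  proof (cases "w \<noteq> [] \<and> a = inv X (last w)")
    case True
    show ?thesis by (rule retract[of "butlast w" "last w"]) (use True sd in simp_all)
  next
    case F1: False
    show ?thesis
    proof (cases "w = [] \<and> a = clabel n")
      case True show ?thesis by (rule forward) (use True sd in simp_all)
    next
      case F2: False
      show ?thesis
      proof (cases "w = [] \<and> a = inv X (clabel (n + p - 1))")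
        case True show ?thesis by (rule backward) (use True sd F2 in simp_all)
      next
        case False show ?thesis by (rule extend) (use False sd F1 F2 in auto)
      qed
    qed
  qed
qed

lemma ustep_extend:
  assumes nf: "normal n (w @ [a])"
  shows "ustep (encode (n, w)) a = encode (n, w @ [a])"
  using normal_butlast[OF nf]
proof (cases rule: ustep_cases[where a = a])
  case (retract w' b)
  then have "(w @ [a]) ! Suc (length w') = inv X ((w @ [a]) ! length w')"
    by (simp add: nth_append)
  then show ?thesis using nf retract(1) unfolding normal_def reduced_def by auto
qed (use nf in \<open>auto simp: normal_def\<close>)

lemma ustep_retract:
  assumes nf: "normal n (w @ [a])"
  shows "ustep (encode (n, w @ [a])) (inv X a) = encode (n, w)"
  using nf by (cases rule: ustep_cases[where a = "inv X a"]) auto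

lemma ustep_forward: "n < p \<Longrightarrow> ustep (take n cword) (cword ! n) = take (Suc n mod p) cword"
proof -
  assume n: "n < p"
  have nf: "normal n []" using normal_Nil n .
  have "ustep (encode (n, [])) (cword ! n) = encode (Suc n mod p, [])" using nf
  proof (cases rule: ustep_cases[where a = "cword ! n"])
    case (retract w' b) then show ?thesis by simp
  next
    case forward then show ?thesis by simp
  next
    case backward then show ?thesis using clabel_less n by simp
  next
    case extend then show ?thesis using clabel_less n by simp
  qed
  then show ?thesis by (simp add: encode_eq)
qed

lemma ustep_backward: "n < p \<Longrightarrow> ustep (take (Suc n mod p) cword) (inv X (cword ! n)) = take n cword"
proof -
  assume n: "n < p"
  let ?m = "Suc n mod p"
  have m: "?m < p" using p1 by simp
  have nf: "normal ?m []" using normal_Nil m .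
  have pm: "(?m + p - 1) mod p = n" using pred_Suc_mod n by blast
  have am: "clabel (?m + p - 1) = cword ! n" using clabel_eq pm by simp
  have "ustep (encode (?m, [])) (inv X (cword ! n)) = encode (n, [])" using nf
  proof (cases rule: ustep_cases[where a = "inv X (cword ! n)"])
    case (retract w' b) then show ?thesis by simp
  next
    case forward then show ?thesis using cword_no_backtrack[OF n] clabel_less[OF m] by simp
  next
    case backward then show ?thesis using pm by simp
  next
    case extend then show ?thesis using am by simp
  qed
  then show ?thesis by (simp add: encode_eq)
qed

lemma ustep_in_nodes:
  assumes nf: "normal n w" and v: "walkable Z g1 base (take n cword @ w @ [a])"
  shows "ustep (encode (n, w)) a \<in> unf_nodes"
  using nf
proof (cases rule: ustep_cases[where a = a])
  case (retract w' b)
  then show ?thesis using normal_butlast nf unf_nodes_iff by metis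
next
  case forward
  then show ?thesis using cword_prefix_in_nodes[of "Suc n mod p"] p1 by (simp add: encode_eq)
next
  case backward
  then show ?thesis using cword_prefix_in_nodes[of "(n + p - 1) mod p"] p1 by (simp add: encode_eq)
next
  case extend
  then show ?thesis using normal_snoc[OF nf v] unf_nodes_iff by metis
qed

lemma unf_simps[simp]: "nodes unf = unf_nodes" "harcs unf = unf_harcs" "src unf = butlast" "tgt unf e = ustep (butlast e) (last e)"
  "inv unf e = ustep (butlast e) (last e) @ [inv X (last e)]"
  by (simp_all add: unf_def)

lemma unf_nodes_walkable: "L \<in> unf_nodes \<Longrightarrow> walkable Z g1 base L"
  using unf_nodes_iff normal_walkable encode_eq by metis

lemma walk_cword_Suc:
  assumes cW: "walk G l v0 cword = v0" and n: "n < p"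
  shows "walk G l v0 (take (Suc n mod p) cword) = label_step G l (walk G l v0 (take n cword)) (cword ! n)"
proof (cases "Suc n < p")
  case True
  then show ?thesis by (simp add: take_Suc_conv_app_nth)
next
  case False
  then have "Suc n = p" using n by simp
  then have "cword = take n cword @ [cword ! n]" by (metis length_cword lessI take_Suc_conv_app_nth take_all order_refl)
  then show ?thesis using cW \<open>Suc n = p\<close> by (metis mod_self take_0 walk_Nil walk_snoc)
qed

lemma walk_cword_back:
  assumes wfG: "wf_graph G" and mG: "morphism G X l0 l" and uG: "locally_injective G l"
    and vW: "walkable G l v0 cword" and cW: "walk G l v0 cword = v0" and n: "n < p"
  shows "label_step G l (walk G l v0 (take (Suc n mod p) cword)) (inv X (cword ! n)) = walk G l v0 (take n cword)"
proof -
  have "walkable G l v0 (take (Suc n) cword)"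
    using walkable_prefix[of G l v0 "take (Suc n) cword" "drop (Suc n) cword"] vW by simp
  then have "walkable G l v0 (take n cword @ [cword ! n])" using n by (simp add: take_Suc_conv_app_nth)
  from walk_backtrack[OF wfG mG uG this] show ?thesis using walk_cword_Suc[OF cW n] by (simp add: walk_def)
qed

lemma walk_ustep:
  assumes wfG: "wf_graph G" and mG: "morphism G X l0 l" and uG: "locally_injective G l"
    and vW: "walkable G l v0 cword" and cW: "walk G l v0 cword = v0"
    and nf: "normal n w" and v: "walkable G l v0 (take n cword @ w @ [a])"
  shows "walk G l v0 (ustep (encode (n, w)) a) = walk G l v0 (take n cword @ w @ [a])"
  using nf
proof (cases rule: ustep_cases[where a = a])
  case (retract w' b)
  have eq: "take n cword @ w @ [a] = (take n cword @ w') @ [b, inv X b]" using retract by simp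
  have vv: "walkable G l v0 ((take n cword @ w') @ [b])"
    using v unfolding eq using walkable_prefix[of G l v0 "(take n cword @ w') @ [b]" "[inv X b]"] by simp
  have "ustep (encode (n, w)) a = take n cword @ w'" using retract(3) by (simp add: encode_eq)
  then show ?thesis unfolding eq using walk_backtrack[OF wfG mG uG vv] by simp
next
  case forward
  have n: "n < p" using nf normal_index by blast
  then show ?thesis using forward clabel_less[OF n] walk_cword_Suc[OF cW n] by (simp add: encode_eq)
next
  case backward
  have n: "n < p" using nf normal_index by blast
  let ?m = "(n + p - 1) mod p"
  have m: "?m < p" using p1 by simp
  have "a = inv X (cword ! ?m)" using backward(3) clabel_eq by simp
  then show ?thesis
    using backward(1,4) walk_cword_back[OF wfG mG uG vW cW m] Suc_pred_mod[OF n] by (simp add: encode_eq)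
next
  case extend
  then show ?thesis by (simp add: encode_eq)
qed

lemma label_X: "walkable Z g1 base (L @ [a]) \<Longrightarrow> a \<in> harcs X"
  using walkable_label_harcs[OF mZ, of base "L @ [a]" "length L"] by simp

lemma inv_inv_X: "a \<in> harcs X \<Longrightarrow> inv X (inv X a) = a"
  using wfX unfolding wf_graph_def by blast

lemma ustep_inv:
  assumes nf: "normal n w" and v: "walkable Z g1 base (take n cword @ w @ [a])"
  shows "ustep (ustep (encode (n, w)) a) (inv X a) = encode (n, w)"
  using nf
proof (cases rule: ustep_cases[where a = a])
  case (retract w' b)
  have "walkable Z g1 base ((take n cword @ w') @ [b])"
    using walkable_prefix[of Z g1 base "take n cword @ w' @ [b]" "[a]"] v retract(1) by simp
  then have "inv X a = b" using retract(2) inv_inv_X[OF label_X] by blast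
  then show ?thesis using retract ustep_extend nf by simp
next
  case forward
  have n: "n < p" using nf normal_index by blast
  then show ?thesis using forward ustep_backward[OF n] clabel_less[OF n] by (simp add: encode_eq)
next
  case backward
  have n: "n < p" using nf normal_index by blast
  let ?m = "(n + p - 1) mod p"
  have m: "?m < p" using p1 by simp
  have "inv X a = cword ! ?m" using backward(3) clabel_eq inv_inv_cword[OF m] by simp
  then show ?thesis using backward(1,4) ustep_forward[OF m] Suc_pred_mod[OF n] by (simp add: encode_eq)
next
  case extend
  then show ?thesis using ustep_retract[OF normal_snoc[OF nf v extend(1,2)]] by simp
qed

lemma unf_harcs_iff: "e \<in> unf_harcs \<longleftrightarrow> (\<exists>n w a. normal n w \<and> walkable Z g1 base (take n cword @ w @ [a]) \<and> e = take n cword @ w @ [a])"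
proof
  assume "e \<in> unf_harcs"
  then obtain L a where La: "e = L @ [a]" "L \<in> unf_nodes" "walkable Z g1 base (L @ [a])" unfolding unf_harcs_def by blast
  then obtain n w where "normal n w" "L = take n cword @ w" unfolding unf_nodes_iff encode_eq by blast
  then show "\<exists>n w a. normal n w \<and> walkable Z g1 base (take n cword @ w @ [a]) \<and> e = take n cword @ w @ [a]"
    using La by auto
next
  assume "\<exists>n w a. normal n w \<and> walkable Z g1 base (take n cword @ w @ [a]) \<and> e = take n cword @ w @ [a]"
  then obtain n w a where o: "normal n w" "walkable Z g1 base (take n cword @ w @ [a])" "e = take n cword @ w @ [a]" by blast
  have "take n cword @ w \<in> unf_nodes" using o(1) unf_nodes_iff encode_eq by metis
  then show "e \<in> unf_harcs" unfolding unf_harcs_def using o by auto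
qed

lemma unf_harcs_snoc: "e \<in> unf_harcs \<Longrightarrow> e = butlast e @ [last e]"
  unfolding unf_harcs_def by auto

lemma cword_closed: "walkable Z g1 base cword" "walk Z g1 base cword = base"
  using cword_walk[of p] by (simp_all add: base_def)

lemma wf_unf: "wf_graph unf"
  unfolding wf_graph_def
proof (intro ballI conjI)
  fix e assume e: "e \<in> harcs unf"
  then obtain n w a where o: "normal n w" "walkable Z g1 base (take n cword @ w @ [a])" "e = take n cword @ w @ [a]"
    using unf_harcs_iff by auto
  have e2: "e = (take n cword @ w) @ [a]" using o(3) by simp
  have bl: "butlast e = encode (n, w)" "last e = a" unfolding e2 by (simp_all add: encode_eq del: append_assoc)
  have tN: "ustep (encode (n, w)) a \<in> unf_nodes" using ustep_in_nodes[OF o(1,2)] .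
  show "src unf e \<in> nodes unf" using bl o(1) unf_nodes_iff by auto
  show "tgt unf e \<in> nodes unf" using bl tN by simp
  have wk: "walk Z g1 base (ustep (encode (n, w)) a) = walk Z g1 base (take n cword @ w @ [a])"
    using walk_ustep[OF wfZ mZ uZ cword_closed o(1,2)] .
  have v2: "walkable Z g1 base ((take n cword @ w) @ [a])" using o(2) by simp
  let ?f = "label_arc Z g1 (walk Z g1 base (take n cword @ w)) a"
  have f: "?f \<in> harcs Z" "src Z ?f = walk Z g1 base (take n cword @ w)" "g1 ?f = a" using walkable_label_arc[OF uZ v2] by auto
  have "walk Z g1 base ((take n cword @ w) @ [a]) = tgt Z ?f" unfolding walk_snoc label_step_def ..
  then have wk2: "walk Z g1 base (ustep (encode (n, w)) a) = tgt Z ?f" using wk by simp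
  obtain f' where f': "f' \<in> harcs Z" "src Z f' = tgt Z ?f" "g1 f' = inv X a" using label_step_inv(1)[OF wfZ mZ uZ f(1)] f(3) by auto
  have "walkable Z g1 base (ustep (encode (n, w)) a @ [inv X a])"
    unfolding walkable_snoc using unf_nodes_walkable[OF tN] f' wk2 by auto
  then have "ustep (encode (n, w)) a @ [inv X a] \<in> unf_harcs" using tN unfolding unf_harcs_def by blast
  then show "inv unf e \<in> harcs unf" using bl by simp
  have aX: "a \<in> harcs X" using label_X v2 by blast
  show "inv unf (inv unf e) = e" using bl ustep_inv[OF o(1,2)] inv_inv_X[OF aX] o(3) by (simp add: encode_eq)
  show "src unf (inv unf e) = tgt unf e" by simp
qed

lemma base_in_nodes: "base \<in> nodes Z"
  using d_morphism p1 unfolding morphism_def base_def by auto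

lemma Nil_in_nodes: "[] \<in> unf_nodes" using normal_Nil[of 0] p1 unf_nodes_iff encode_eq by (metis append_Nil take_0 less_le_trans zero_less_one)

lemma walk_hom_Nil: "fst (walk_hom G l v) [] = v"
  using Nil_in_nodes unfolding walk_hom_def by simp

context
  fixes G :: "('g, 'gh) ugraph" and l0 :: "'g \<Rightarrow> 'x" and l :: "'gh \<Rightarrow> 'xh" and v0 :: 'g
  assumes wfG: "wf_graph G" and cG: "covering G X l0 l" and nlG: "\<not> has_loop G"
    and v0: "v0 \<in> nodes G" and lv: "l0 v0 = g0 base"
    and walkable_iff: "\<And>w. walkable G l v0 w \<longleftrightarrow> walkable Z g1 base w"
    and cW: "walk G l v0 cword = v0"
begin

lemma walk_hom_arc:
  assumes e: "e \<in> unf_harcs"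
  shows "snd (walk_hom G l v0) e \<in> harcs G \<and> src G (snd (walk_hom G l v0) e) = fst (walk_hom G l v0) (butlast e)
    \<and> l (snd (walk_hom G l v0) e) = last e \<and> tgt G (snd (walk_hom G l v0) e) = fst (walk_hom G l v0) (tgt unf e)
    \<and> inv G (snd (walk_hom G l v0) e) = snd (walk_hom G l v0) (inv unf e)"
proof -
  have mG: "morphism G X l0 l" using cG unfolding covering_def by blast
  have uG: "locally_injective G l" using covering_locally_injective[OF wfG cG nlG] .
  obtain n w a where o: "normal n w" "walkable Z g1 base (take n cword @ w @ [a])" "e = take n cword @ w @ [a]"
    using unf_harcs_iff e by auto
  let ?L = "take n cword @ w"
  have LN: "?L \<in> unf_nodes" using o(1) unf_nodes_iff encode_eq by metis
  have bl: "butlast e = ?L" "last e = a" using o(3) by (simp_all add: butlast_append)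
  have vG: "walkable G l v0 (?L @ [a])" using walkable_iff o(2) by simp
  let ?f = "label_arc G l (walk G l v0 ?L) a"
  have f: "?f \<in> harcs G" "src G ?f = walk G l v0 ?L" "l ?f = a" using walkable_label_arc[OF uG vG] by auto
  have k1e: "snd (walk_hom G l v0) e = ?f" unfolding walk_hom_def using e bl by simp
  have sN: "ustep ?L a \<in> unf_nodes" using ustep_in_nodes[OF o(1,2)] encode_eq by simp
  have tU: "tgt unf e = ustep ?L a" using bl by simp
  have vW: "walkable G l v0 cword" using walkable_iff cword_closed(1) by simp
  have "walk G l v0 (ustep ?L a) = walk G l v0 (?L @ [a])"
    using walk_ustep[OF wfG mG uG vW cW o(1)] vG encode_eq by simp
  then have tg: "fst (walk_hom G l v0) (tgt unf e) = tgt G ?f"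
    unfolding tU walk_hom_def using sN walk_snoc[of G l v0 ?L a] by (simp add: label_step_def)
  have iH: "inv unf e \<in> unf_harcs" using wf_unf e unfolding wf_graph_def by auto
  have fi: "inv G ?f \<in> harcs G" "src G (inv G ?f) = tgt G ?f" "l (inv G ?f) = inv X a"
    using wfG mG f unfolding wf_graph_def morphism_def by metis+
  have "snd (walk_hom G l v0) (inv unf e) = label_arc G l (walk G l v0 (ustep ?L a)) (inv X a)"
    unfolding walk_hom_def using iH bl by simp
  also have "\<dots> = label_arc G l (tgt G ?f) (inv X a)" using tg sN unfolding tU walk_hom_def by simp
  also have "\<dots> = inv G ?f" using label_arc_eq[OF uG fi] by simp
  finally show ?thesis using f k1e bl tg LN unfolding walk_hom_def by simp
qed

lemma walk_hom_covering: "covering unf G (fst (walk_hom G l v0)) (snd (walk_hom G l v0))"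
proof -
  have uG: "locally_injective G l" using covering_locally_injective[OF wfG cG nlG] .
  have vN: "walkable G l v0 L" if "L \<in> unf_nodes" for L using walkable_iff unf_nodes_walkable[OF that] by simp
  have "morphism unf G (fst (walk_hom G l v0)) (snd (walk_hom G l v0))"
    unfolding morphism_def
    using walk_hom_arc walk_in_nodes[OF wfG uG v0 vN] by (simp add: walk_hom_def)
  then show ?thesis
  proof (rule covering_if_locally_bijective[OF wf_unf wfG _ nlG])
    fix v e' assume v: "v \<in> nodes unf" and e': "e' \<in> harcs G" "src G e' = fst (walk_hom G l v0) v"
    then have vN': "v \<in> unf_nodes" by simp
    have "walkable G l v0 (v @ [l e'])" unfolding walkable_snoc using vN[OF vN'] e' vN' by (auto simp: walk_hom_def)
    then have eH': "v @ [l e'] \<in> unf_harcs" using vN' walkable_iff unfolding unf_harcs_def by blast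
    have "snd (walk_hom G l v0) (v @ [l e']) = label_arc G l (walk G l v0 v) (l e')"
      unfolding walk_hom_def using eH' by simp
    also have "\<dots> = e'" using label_arc_eq[OF uG e'(1)] e'(2) vN' unfolding walk_hom_def by simp
    finally show "\<exists>e\<in>harcs unf. src unf e = v \<and> snd (walk_hom G l v0) e = e'"
      using eH' by (intro bexI[of _ "v @ [l e']"]) auto
  next
    fix e1 e2 assume e: "e1 \<in> harcs unf" "e2 \<in> harcs unf" "src unf e1 = src unf e2"
      "snd (walk_hom G l v0) e1 = snd (walk_hom G l v0) e2"
    have "last e1 = last e2" using walk_hom_arc[of e1] walk_hom_arc[of e2] e by auto
    then show "e1 = e2" using e unf_harcs_snoc by (metis unf_simps(2,3))
  qed
qed

lemma walk_hom_in_homC: "walk_hom G l v0 \<in> homC unf unf_proj last G l0 l"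
proof -
  have mG: "morphism G X l0 l" using cG unfolding covering_def by blast
  have uG: "locally_injective G l" using covering_locally_injective[OF wfG cG nlG] .
  have lab0: "l0 (walk G l v0 v) = unf_proj v" if v: "v \<in> unf_nodes" for v
  proof (cases "v = []")
    case True then show ?thesis using lv unfolding unf_proj_def by simp
  next
    case False
    have "l0 (walk G l v0 v) = tgt X (last v)"
      using walk_end_label[OF mG uG _ False] walkable_iff unf_nodes_walkable[OF v] by simp
    moreover have "g0 (walk Z g1 base v) = tgt X (last v)"
      using walk_end_label[OF mZ uZ unf_nodes_walkable[OF v] False] .
    ultimately show ?thesis unfolding unf_proj_def by simp
  qed
  show ?thesis
    using walk_hom_covering lab0 walk_hom_arc unfolding homC_def by (auto simp: walk_hom_def)
qed

end

lemma normal_take: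
  assumes nf: "normal n w" shows "normal n (take j w)"
proof -
  have o: "n < p" "walkable Z g1 base (take n cword @ w)" "reduced w"
     "w \<noteq> [] \<longrightarrow> hd w \<noteq> clabel n \<and> hd w \<noteq> inv X (clabel (n + p - 1))"
    using nf unfolding normal_def by auto
  have "walkable Z g1 base (take n cword @ take j w)"
    using walkable_prefix[of Z g1 base "take n cword @ take j w" "drop j w"] o(2) by simp
  moreover have "reduced (take j w)" using reduced_take[OF o(3)] .
  moreover have "take j w \<noteq> [] \<longrightarrow> hd (take j w) \<noteq> clabel n \<and> hd (take j w) \<noteq> inv X (clabel (n + p - 1))"
    using o(4) by (cases w; cases j) auto
  ultimately show ?thesis using o(1) unfolding normal_def by blast
qed

lemma prefix_in_unf:
  assumes L: "L \<in> unf_nodes" and i: "i < length L"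
  shows "take i L \<in> unf_nodes \<and> take i L @ [L ! i] \<in> unf_harcs \<and> ustep (take i L) (L ! i) = take (Suc i) L"
proof -
  obtain n w where o: "normal n w" "L = take n cword @ w" using L unf_nodes_iff encode_eq by metis
  have n: "n < p" using o(1) normal_index by blast
  show ?thesis
  proof (cases "i < n")
    case True
    have tk: "take i L = take i cword" "L ! i = cword ! i" "take (Suc i) L = take (Suc i) cword"
      using True n o(2) by (simp_all add: nth_append min_def)
    have N1: "take i cword \<in> unf_nodes" using cword_prefix_in_nodes True n by simp
    have "walkable Z g1 base (take i cword @ [cword ! i])"
      using cword_walk[of "Suc i"] True n by (simp add: take_Suc_conv_app_nth)
    then have H1: "take i cword @ [cword ! i] \<in> unf_harcs" using N1 unfolding unf_harcs_def by blast
    have "ustep (take i cword) (cword ! i) = take (Suc i) cword" using ustep_forward[of i] True n by simp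
    then show ?thesis using tk N1 H1 by simp
  next
    case False
    define j where "j = i - n"
    have ij: "i = n + j" using False j_def by simp
    have jw: "j < length w" using i o(2) ij n by simp
    have tk: "take i L = take n cword @ take j w" "L ! i = w ! j"
      "take (Suc i) L = take n cword @ take j w @ [w ! j]"
      using ij n o(2) jw by (simp_all add: nth_append take_Suc_conv_app_nth)
    have nf: "normal n (take j w @ [w ! j])"
      using normal_take[OF o(1), of "Suc j"] jw by (simp add: take_Suc_conv_app_nth)
    have N1: "take n cword @ take j w \<in> unf_nodes" using normal_butlast[OF nf] unf_nodes_iff encode_eq by metis
    have H1: "take n cword @ take j w @ [w ! j] \<in> unf_harcs"
      using N1 normal_walkable[OF nf] unfolding unf_harcs_def by auto
    have "ustep (take n cword @ take j w) (w ! j) = take n cword @ take j w @ [w ! j]"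
      using ustep_extend[OF nf] by (simp add: encode_eq)
    then show ?thesis using tk N1 H1 by simp
  qed
qed

lemma homC_eq_walk_hom:
  assumes wfG: "wf_graph G" and cG: "covering G X l0 l" and nlG: "\<not> has_loop G"
    and k: "(k0, k1) \<in> homC unf unf_proj last G l0 l"
  shows "(k0, k1) = walk_hom G l (k0 [])"
proof -
  have uG: "locally_injective G l" using covering_locally_injective[OF wfG cG nlG] .
  have kc: "k0 \<in> extensional unf_nodes" "k1 \<in> extensional unf_harcs" "covering unf G k0 k1"
    "\<And>e. e \<in> unf_harcs \<Longrightarrow> l (k1 e) = last e"
    using k unfolding homC_def by auto
  have m: "morphism unf G k0 k1" using kc(3) unfolding covering_def by blast
  have me: "k1 e \<in> harcs G \<and> src G (k1 e) = k0 (butlast e) \<and> tgt G (k1 e) = k0 (ustep (butlast e) (last e))"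
    if "e \<in> unf_harcs" for e using m that unfolding morphism_def by simp
  have he1: "k1 e = label_arc G l (k0 (butlast e)) (last e)" if e: "e \<in> unf_harcs" for e
    using label_arc_eq[OF uG] me[OF e] kc(4)[OF e] by metis
  have wk: "k0 (take i L) = walk G l (k0 []) (take i L)" if L: "L \<in> unf_nodes" and i: "i \<le> length L" for L i
    using i
  proof (induction i)
    case 0 then show ?case by simp
  next
    case (Suc i)
    then have il: "i < length L" by simp
    note P = prefix_in_unf[OF L il]
    let ?e = "take i L @ [L ! i]"
    have "k0 (take (Suc i) L) = tgt G (k1 ?e)" using me[of ?e] P by simp
    also have "\<dots> = tgt G (label_arc G l (k0 (take i L)) (L ! i))" using he1[of ?e] P by simp
    also have "\<dots> = walk G l (k0 []) (take (Suc i) L)" using Suc.IH il by (simp add: take_Suc_conv_app_nth label_step_def)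
    finally show ?case .
  qed
  have w0: "k0 L = walk G l (k0 []) L" if "L \<in> unf_nodes" for L using wk[OF that, of "length L"] by simp
  have "k0 = restrict (walk G l (k0 [])) unf_nodes"
    by (rule extensionalityI[OF kc(1) restrict_extensional]) (simp add: w0)
  moreover have "k1 = restrict (\<lambda>e. label_arc G l (walk G l (k0 []) (butlast e)) (last e)) unf_harcs"
  proof (rule extensionalityI[OF kc(2) restrict_extensional])
    fix e assume e: "e \<in> unf_harcs"
    then have "butlast e \<in> unf_nodes" unfolding unf_harcs_def by auto
    then show "k1 e = restrict (\<lambda>e. label_arc G l (walk G l (k0 []) (butlast e)) (last e)) unf_harcs e"
      using he1[OF e] w0 e by simp
  qed
  ultimately show ?thesis unfolding walk_hom_def by simp
qed

lemma cyc_emb1_in_harcs: assumes n: "n < p" shows "cyc_emb1 (n, True) \<in> unf_harcs" "cyc_emb1 (n, False) \<in> unf_harcs"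
proof -
  have "walkable Z g1 base (take (Suc n) cword)" using cword_walk[of "Suc n"] n by simp
  then have "walkable Z g1 base (take n cword @ [cword ! n])" using n by (simp add: take_Suc_conv_app_nth)
  then show "cyc_emb1 (n, True) \<in> unf_harcs" using cword_prefix_in_nodes[OF n] unfolding unf_harcs_def cyc_emb1_def by auto
  let ?m = "Suc n mod p"
  have m: "?m < p" using p1 by simp
  have cw: "walkable Z g1 base (take ?m cword)" "walk Z g1 base (take ?m cword) = d0 ?m" using cword_walk[of ?m] m by auto
  note A = d1_arcs[OF n]
  have "walkable Z g1 base (take ?m cword @ [inv X (cword ! n)])" unfolding walkable_snoc
    using cw A d1_backward_label[OF n] by auto
  then show "cyc_emb1 (n, False) \<in> unf_harcs" using cword_prefix_in_nodes[OF m] unfolding unf_harcs_def cyc_emb1_def by auto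
qed

lemma cyc_emb_morphism: "morphism (cyc p) unf cyc_emb0 cyc_emb1"
  unfolding morphism_def
proof (intro conjI ballI)
  fix v assume "v \<in> nodes (cyc p)"
  then show "cyc_emb0 v \<in> nodes unf" using cword_prefix_in_nodes unfolding cyc_emb0_def by simp
next
  fix u assume "u \<in> harcs (cyc p)"
  then obtain n b where u: "u = (n, b)" "n < p" by auto
  have m: "Suc n mod p < p" using p1 by simp
  have ii: "inv X (inv X (cword ! n)) = cword ! n" using inv_inv_cword u(2) .
  show "cyc_emb1 u \<in> harcs unf" using cyc_emb1_in_harcs u by (cases b) auto
  show "src unf (cyc_emb1 u) = cyc_emb0 (src (cyc p) u)" using u by (cases b) (auto simp: cyc_emb1_def cyc_emb0_def)
  show "tgt unf (cyc_emb1 u) = cyc_emb0 (tgt (cyc p) u)" using u ustep_forward ustep_backward by (cases b) (auto simp: cyc_emb1_def cyc_emb0_def)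
  show "inv unf (cyc_emb1 u) = cyc_emb1 (inv (cyc p) u)" using u ustep_forward ustep_backward ii by (cases b) (auto simp: cyc_emb1_def cyc_emb0_def)
qed

lemma cyc_emb0_inj: "inj_on cyc_emb0 (nodes (cyc p))"
  by (rule inj_onI) (auto simp: cyc_emb0_def dest: arg_cong[where f = length])

lemma cyc_emb1_inj: "inj_on cyc_emb1 (harcs (cyc p))"
proof (rule inj_onI)
  fix u v assume u: "u \<in> harcs (cyc p)" and v: "v \<in> harcs (cyc p)" and e: "cyc_emb1 u = cyc_emb1 v"
  obtain n b where un: "u = (n, b)" "n < p" using u by auto
  obtain m c where vm: "v = (m, c)" "m < p" using v by auto
  have mn: "Suc n mod p < p" "Suc m mod p < p" using p1 by auto
  have L: "length (cyc_emb1 u) = length (cyc_emb1 v)" "last (cyc_emb1 u) = last (cyc_emb1 v)" using e by auto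
  show "u = v"
  proof (cases b; cases c)
    assume "b" "c" then show ?thesis using L un vm by (simp add: cyc_emb1_def)
  next
    assume "\<not> b" "\<not> c"
    then have "Suc n mod p = Suc m mod p" using L un vm mn by (simp add: cyc_emb1_def)
    then have "n = m" using pred_Suc_mod un(2) vm(2) by metis
    then show ?thesis using un vm \<open>\<not> b\<close> \<open>\<not> c\<close> by simp
  next
    assume "b" "\<not> c"
    then have "n = Suc m mod p" "cword ! n = inv X (cword ! m)" using L un vm mn by (simp_all add: cyc_emb1_def)
    then show ?thesis using cword_no_backtrack[OF vm(2)] by simp
  next
    assume "\<not> b" "c"
    then have "m = Suc n mod p" "cword ! m = inv X (cword ! n)" using L un vm mn by (simp_all add: cyc_emb1_def)
    then show ?thesis using cword_no_backtrack[OF un(2)] by simp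
  qed
qed

definition "cycle_harcs = cyc_emb1 ` harcs (cyc p)"

definition "unf_cut = unf\<lparr>harcs := unf_harcs - cycle_harcs\<rparr>"

lemma unf_cut_simps[simp]: "nodes unf_cut = unf_nodes" "harcs unf_cut = unf_harcs - cycle_harcs" "src unf_cut = butlast" "tgt unf_cut e = ustep (butlast e) (last e)"
  "inv unf_cut e = ustep (butlast e) (last e) @ [inv X (last e)]"
  by (simp_all add: unf_cut_def unf_def)

lemma unf_cut_arc_cases:
  assumes e: "e \<in> unf_harcs" "e \<notin> cycle_harcs"
  obtains n w where "normal n w" "butlast e = encode (n, w)"
    "(\<exists>w' b. w = w' @ [b] \<and> last e = inv X b \<and> ustep (butlast e) (last e) = encode (n, w') \<and> normal n w')
     \<or> (normal n (w @ [last e]) \<and> ustep (butlast e) (last e) = encode (n, w @ [last e]))"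
proof -
  obtain n w a where o: "normal n w" "walkable Z g1 base (take n cword @ w @ [a])" "e = take n cword @ w @ [a]"
    using unf_harcs_iff e(1) by auto
  have bl: "butlast e = encode (n, w)" "last e = a" using o(3) by (simp_all add: butlast_append encode_eq)
  have n: "n < p" using o(1) normal_index by blast
  show ?thesis using o(1)
  proof (cases rule: ustep_cases[where a = a])
    case (retract w' b)
    have "normal n w'" using normal_butlast o(1) retract(1) by blast
    then have "\<exists>w' b. w = w' @ [b] \<and> last e = inv X b \<and> ustep (butlast e) (last e) = encode (n, w') \<and> normal n w'"
      using retract bl by auto
    then show ?thesis using that[OF o(1) bl(1)] by blast
  next
    case forward
    have "e = cyc_emb1 (n, True)" using o(3) forward clabel_less n by (simp add: cyc_emb1_def)
    then have "e \<in> cycle_harcs" using n unfolding cycle_harcs_def by auto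
    then show ?thesis using e(2) by blast
  next
    case backward
    let ?m = "(n + p - 1) mod p"
    have m: "?m < p" using p1 by simp
    have "e = cyc_emb1 (?m, False)" using o(3) backward clabel_eq Suc_pred_mod n by (simp add: cyc_emb1_def)
    then have "e \<in> cycle_harcs" using m unfolding cycle_harcs_def by auto
    then show ?thesis using e(2) by blast
  next
    case extend
    have "normal n (w @ [a])" using normal_snoc[OF o(1,2) extend(1,2)] .
    then have "normal n (w @ [last e]) \<and> ustep (butlast e) (last e) = encode (n, w @ [last e])" using bl extend(3) by simp
    then show ?thesis using that[OF o(1) bl(1)] by blast
  qed
qed

definition "depth L = length (snd (decode L))"

lemma unf_cut_arc_depth:
  assumes e: "e \<in> harcs unf_cut"
  shows "tgt unf_cut e = src unf_cut e @ [last e] \<and> depth (tgt unf_cut e) = Suc (depth (src unf_cut e))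
    \<or> (\<exists>b. src unf_cut e = tgt unf_cut e @ [b] \<and> last e = inv X b
          \<and> depth (src unf_cut e) = Suc (depth (tgt unf_cut e)))"
proof -
  have e': "e \<in> unf_harcs" "e \<notin> cycle_harcs" using e by simp_all
  obtain n w where nf: "normal n w" "butlast e = encode (n, w)"
    and d: "(\<exists>w' b. w = w' @ [b] \<and> last e = inv X b \<and> ustep (butlast e) (last e) = encode (n, w') \<and> normal n w')
     \<or> (normal n (w @ [last e]) \<and> ustep (butlast e) (last e) = encode (n, w @ [last e]))"
    by (rule unf_cut_arc_cases[OF e'])
  from d show ?thesis
  proof (elim disjE exE conjE)
    fix w' b assume "w = w' @ [b]" "last e = inv X b" "ustep (butlast e) (last e) = encode (n, w')" "normal n w'"
    then show ?thesis using nf decode_encode unfolding depth_def by (simp add: encode_eq)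
  next
    assume "normal n (w @ [last e])" "ustep (butlast e) (last e) = encode (n, w @ [last e])"
    then show ?thesis using nf decode_encode unfolding depth_def by (simp add: encode_eq)
  qed
qed

text \<open>Off the cycle every arc changes the depth by one. On a cycle of \<open>unf_cut\<close>, a node of
  maximal depth is entered by a deepening arc, so it has to be left along the reverse arc.\<close>

lemma forest_unf_cut: "forest unf_cut"
  unfolding forest_def
proof (intro allI impI equals0I)
  fix q :: nat and c assume q: "q \<ge> 1" and c: "c \<in> nb_cycles q unf_cut"
  obtain c0 c1 where cm: "morphism (cyc q) unf_cut c0 c1" and nb: "\<not> backtracking q c1"
    using c unfolding nb_cycles_def p_cycles_def by auto
  have arc: "c1 (i, True) \<in> harcs unf_cut \<and> src unf_cut (c1 (i, True)) = c0 i
      \<and> tgt unf_cut (c1 (i, True)) = c0 (Suc i mod q)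
      \<and> c1 (i, False) = c0 (Suc i mod q) @ [inv X (last (c1 (i, True)))]"
    if "i < q" for i
  proof -
    have "(i, True) \<in> harcs (cyc q)" using that by simp
    with cm show ?thesis unfolding morphism_def by fastforce
  qed
  define f where "f i = depth (c0 i)" for i
  have fin: "finite (f ` {0..<q})" "f ` {0..<q} \<noteq> {}" using q by auto
  obtain n0 where n0: "n0 < q" "f n0 = Max (f ` {0..<q})" using Max_in[OF fin] by auto
  have mx: "f i \<le> f n0" if "i < q" for i using Max_ge[OF fin(1)] that n0(2) by auto
  define m where "m = (n0 + q - 1) mod q"
  have m: "m < q" "Suc m mod q = n0" using q n0(1) Suc_pred_mod[of n0 q] by (simp_all add: m_def)
  let ?e1 = "c1 (m, True)" and ?e2 = "c1 (n0, True)"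
  have e1: "?e1 \<in> harcs unf_cut" "src unf_cut ?e1 = c0 m" "tgt unf_cut ?e1 = c0 n0"
    using arc[OF m(1)] m(2) by auto
  have e2: "?e2 \<in> harcs unf_cut" "src unf_cut ?e2 = c0 n0" "tgt unf_cut ?e2 = c0 (Suc n0 mod q)"
    using arc[OF n0(1)] by auto
  have up: "c0 n0 = c0 m @ [last ?e1]"
    using unf_cut_arc_depth[OF e1(1)] mx[OF m(1)] unfolding e1(2,3) f_def by auto
  have "\<not> depth (c0 (Suc n0 mod q)) = Suc (depth (c0 n0))"
    using mx[of "Suc n0 mod q"] q unfolding f_def by simp
  then obtain b where down: "c0 n0 = c0 (Suc n0 mod q) @ [b]" "last ?e2 = inv X b"
    using unf_cut_arc_depth[OF e2(1)] unfolding e2(2,3) by blast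
  have "b = last ?e1" using up down(1) by (metis last_snoc)
  have "?e2 = butlast ?e2 @ [last ?e2]" by (rule unf_harcs_snoc) (use arc[OF n0(1)] in simp)
  also have "\<dots> = c0 n0 @ [inv X (last ?e1)]" using arc[OF n0(1)] down(2) \<open>b = last ?e1\<close> by simp
  also have "\<dots> = c1 (m, False)" using arc[OF m(1)] m(2) by simp
  finally have "c1 (Suc m mod q, True) = c1 (m, False)" using m(2) by simp
  then show False using nb m(1) unfolding backtracking_def by blast
qed

lemma conn_unf_cut_index:
  assumes "(x, y) \<in> conn unf_cut" "x \<in> unf_nodes"
  shows "y \<in> unf_nodes \<and> fst (decode y) = fst (decode x)"
  using assms(1) unfolding conn_def
proof (induction rule: rtrancl_induct)
  case base then show ?case using assms(2) by simp
next
  case (step y z)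
  then obtain u where u: "u \<in> unf_harcs - cycle_harcs" "butlast u = y" "ustep (butlast u) (last u) = z" by auto
  obtain n w where o: "normal n w" "butlast u = encode (n, w)"
    and d: "(\<exists>w' b. w = w' @ [b] \<and> last u = inv X b \<and> ustep (butlast u) (last u) = encode (n, w') \<and> normal n w')
     \<or> (normal n (w @ [last u]) \<and> ustep (butlast u) (last u) = encode (n, w @ [last u]))"
    using unf_cut_arc_cases[of u] u(1) by blast
  obtain w'' where w'': "normal n w''" "z = encode (n, w'')" using d u(3) by blast
  have "z \<in> unf_nodes" using w'' unf_nodes_iff by blast
  moreover have "fst (decode z) = fst (decode y)" using w'' o u(2) decode_encode by simp
  ultimately show ?case using step.IH by simp
qed

lemma conn_unf_cut_root: "normal n w \<Longrightarrow> (encode (n, w), take n cword) \<in> conn unf_cut"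
proof (induction w rule: rev_induct)
  case Nil then show ?case by (simp add: encode_eq conn_def)
next
  case (snoc b w')
  have okw': "normal n w'" using normal_butlast snoc.prems by blast
  let ?x = "encode (n, w' @ [b])"
  let ?u = "?x @ [inv X b]"
  have xN: "?x \<in> unf_nodes" using snoc.prems unf_nodes_iff by blast
  have "walkable Z g1 base ((take n cword @ w') @ [b])" using normal_walkable[OF snoc.prems] by simp
  then have "walkable Z g1 base ((take n cword @ w') @ [b, inv X b])" using walk_backtrack[OF wfZ mZ uZ] by blast
  then have uH: "?u \<in> unf_harcs" using xN unfolding unf_harcs_def by (auto simp: encode_eq)
  have uHC: "?u \<notin> cycle_harcs"
  proof
    assume "?u \<in> cycle_harcs"
    then obtain j c where j: "j < p" "?u = cyc_emb1 (j, c)" unfolding cycle_harcs_def by auto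
    have "\<exists>j'. j' < p \<and> butlast ?u = encode (j', [])"
    proof (cases c)
      case True then show ?thesis using j by (auto simp: cyc_emb1_def encode_eq)
    next
      case False
      have "Suc j mod p < p" using p1 by simp
      moreover have "butlast ?u = encode (Suc j mod p, [])" using j False by (simp add: cyc_emb1_def encode_eq)
      ultimately show ?thesis by blast
    qed
    then obtain j' where j': "j' < p" "?x = encode (j', [])" by auto
    then have "(n, w' @ [b]) = (j', [])" using encode_inj snoc.prems normal_Nil[OF j'(1)] unfolding inj_on_def normals_def by blast
    then show False by simp
  qed
  have st: "ustep ?x (inv X b) = encode (n, w')" using ustep_retract[OF snoc.prems] .
  have "(?x, encode (n, w')) \<in> {(x, y). \<exists>u\<in>harcs unf_cut. src unf_cut u = x \<and> tgt unf_cut u = y}"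
    using uH uHC st by (intro CollectI, simp, intro bexI[of _ ?u]) auto
  then show ?case using snoc.IH[OF okw'] unfolding conn_def by (rule converse_rtrancl_into_rtrancl)
qed

lemma unique_root: "x \<in> nodes unf \<Longrightarrow> \<exists>!c. c \<in> cyc_emb0 ` nodes (cyc p) \<and> (x, c) \<in> conn unf_cut"
proof -
  assume "x \<in> nodes unf"
  then obtain n w where o: "normal n w" "x = encode (n, w)" using unf_nodes_iff by auto
  have n: "n < p" using o(1) normal_index by blast
  have ex: "take n cword \<in> cyc_emb0 ` nodes (cyc p) \<and> (x, take n cword) \<in> conn unf_cut"
    using conn_unf_cut_root[OF o(1)] o(2) n unfolding cyc_emb0_def by auto
  show ?thesis
  proof (rule ex1I[of _ "take n cword"])
    show "take n cword \<in> cyc_emb0 ` nodes (cyc p) \<and> (x, take n cword) \<in> conn unf_cut" using ex .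
  next
    fix c assume c: "c \<in> cyc_emb0 ` nodes (cyc p) \<and> (x, c) \<in> conn unf_cut"
    then obtain j where j: "j < p" "c = take j cword" unfolding cyc_emb0_def by auto
    have xN: "x \<in> unf_nodes" using o unf_nodes_iff by blast
    have "fst (decode c) = fst (decode x)" using conn_unf_cut_index[OF _ xN] c by blast
    moreover have "decode c = (j, [])" using j decode_encode[OF normal_Nil[OF j(1)]] by (simp add: encode_eq)
    moreover have "decode x = (n, w)" using o decode_encode by simp
    ultimately show "c = take n cword" using j by simp
  qed
qed

lemma walk_hom_Z: "walk_hom Z g1 base \<in> homC unf unf_proj last Z g0 g1"
  by (rule walk_hom_in_homC[OF wfZ covZ nlZ base_in_nodes refl refl cword_closed(2)])

lemma covering_unf: "covering unf X unf_proj last"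
proof -
  have h: "covering unf Z (fst (walk_hom Z g1 base)) (snd (walk_hom Z g1 base))"
    "\<And>v. v \<in> nodes unf \<Longrightarrow> g0 (fst (walk_hom Z g1 base) v) = unf_proj v"
    "\<And>e. e \<in> harcs unf \<Longrightarrow> g1 (snd (walk_hom Z g1 base) e) = last e"
    using walk_hom_Z unfolding homC_def by auto
  show ?thesis by (rule covering_comp[OF wf_unf h(1) covZ]) (use h in auto)
qed

lemma in_R_unf: "in_R p X unf unf_proj last"
  unfolding in_R_def Let_def
proof (intro conjI exI[of _ cyc_emb0] exI[of _ cyc_emb1] wf_unf covering_unf cyc_emb_morphism cyc_emb0_inj cyc_emb1_inj)
  have eq: "unf\<lparr>harcs := harcs unf - cyc_emb1 ` harcs (cyc p)\<rparr> = unf_cut" unfolding unf_cut_def cycle_harcs_def by simp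
  show "forest (unf\<lparr>harcs := harcs unf - cyc_emb1 ` harcs (cyc p)\<rparr>)" unfolding eq by (rule forest_unf_cut)
  show "\<forall>x\<in>nodes unf. \<exists>!c. c \<in> cyc_emb0 ` nodes (cyc p) \<and> (x, c) \<in> conn (unf\<lparr>harcs := harcs unf - cyc_emb1 ` harcs (cyc p)\<rparr>)"
    unfolding eq using unique_root by blast
qed

lemma walk_hom_Z_cyc_emb0: "n < p \<Longrightarrow> fst (walk_hom Z g1 base) (cyc_emb0 n) = d0 n"
  using cword_walk[of n] cword_prefix_in_nodes[of n] unfolding walk_hom_def cyc_emb0_def by simp

lemma walk_hom_Z_cyc_emb1: assumes u: "u \<in> harcs (cyc p)" shows "snd (walk_hom Z g1 base) (cyc_emb1 u) = d1 u"
proof -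
  obtain n b where ub: "u = (n, b)" "n < p" using u by auto
  have m: "Suc n mod p < p" using p1 by simp
  note A = d1_arcs[OF ub(2)]
  have harc: "cyc_emb1 (n, b) \<in> unf_harcs" using cyc_emb1_in_harcs[OF ub(2)] by (cases b) auto
  show ?thesis
  proof (cases b)
    case True
    have "label_arc Z g1 (d0 n) (cword ! n) = d1 (n, True)" using label_arc_eq[OF uZ] A nth_cword[OF ub(2)] by simp
    then show ?thesis using harc ub True cword_walk[of n] unfolding walk_hom_def by (simp add: cyc_emb1_def)
  next
    case False
    have "label_arc Z g1 (d0 (Suc n mod p)) (inv X (cword ! n)) = d1 (n, False)"
      by (rule label_arc_eq[OF uZ]) (use A d1_backward_label[OF ub(2)] in auto)
    then show ?thesis using harc ub False cword_walk[of "Suc n mod p"] m unfolding walk_hom_def by (simp add: cyc_emb1_def)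
  qed
qed

end

section \<open>Lifting cycles through a weak equivalence\<close>

locale nb_cycle_lift = nb_cycle X Z g0 g1 p d0 d1
  for X :: "('x, 'xh) ugraph" and Z :: "('z, 'zh) ugraph" and g0 g1 p d0 d1 +
  fixes Y :: "('y, 'yh) ugraph" and f0 :: "'y \<Rightarrow> 'x" and f1 :: "'yh \<Rightarrow> 'xh"
    and h0 :: "'y \<Rightarrow> 'z" and h1 :: "'yh \<Rightarrow> 'zh"
  assumes objY: "objC X Y f0 f1" and nlY: "\<not> has_loop Y" and morh: "morC X Y f0 f1 Z g0 g1 h0 h1"
begin

lemma wfY: "wf_graph Y" and covY: "covering Y X f0 f1" and uY: "locally_injective Y f1"
  using objY covering_locally_injective[OF _ _ nlY] unfolding objC_def by auto

lemma covh: "covering Y Z h0 h1" and lab0: "\<And>v. v \<in> nodes Y \<Longrightarrow> g0 (h0 v) = f0 v"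
  and lab1: "\<And>a. a \<in> harcs Y \<Longrightarrow> g1 (h1 a) = f1 a"
  using morh unfolding morC_def by auto

lemma lift_cycle_labels:
  assumes c: "(c0, c1) \<in> p_cycles p Y" and cd: "compose_with (cyc p) h0 h1 (c0, c1) = (d0, d1)"
    and i: "i < p"
  shows "f1 (c1 (i, True)) = cword ! i"
proof -
  have "c1 (i, True) \<in> harcs Y" using c i unfolding p_cycles_def morphism_def by auto
  then have "f1 (c1 (i, True)) = g1 (h1 (c1 (i, True)))" using lab1 by simp
  also have "\<dots> = g1 (d1 (i, True))" using cd i by (auto simp: compose_with_def)
  finally show ?thesis using nth_cword[OF i] by simp
qed

lemma lift_cycle_hom:
  assumes c: "(c0, c1) \<in> p_cycles p Y" and cd: "compose_with (cyc p) h0 h1 (c0, c1) = (d0, d1)"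
  shows "walk_hom Y f1 (c0 0) \<in> homC unf unf_proj last Y f0 f1"
    and "compose_with unf h0 h1 (walk_hom Y f1 (c0 0)) = walk_hom Z g1 base"
proof -
  have m: "morphism (cyc p) Y c0 c1" using c unfolding p_cycles_def by auto
  have v0: "c0 0 \<in> nodes Y" using m p1 unfolding morphism_def by auto
  have hz: "h0 (c0 0) = base" using cd p1 unfolding base_def by (auto simp: compose_with_def)
  have closed: "walk Y f1 (c0 0) cword = c0 0"
    using cycle_walk[OF uY m length_cword lift_cycle_labels[OF c cd], of p] by auto
  have "walkable Y f1 (c0 0) w \<longleftrightarrow> walkable Z g1 base w" for w
    using covering_walk_lift[OF wfY wfZ covh nlZ uY uZ lab1 v0, of w] hz by simp
  moreover have "f0 (c0 0) = g0 base" using lab0[OF v0] hz by simp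
  ultimately show hom: "walk_hom Y f1 (c0 0) \<in> homC unf unf_proj last Y f0 f1"
    using walk_hom_in_homC[OF wfY covY nlY v0 _ _ closed] by simp
  let ?k = "compose_with unf h0 h1 (walk_hom Y f1 (c0 0))"
  have "?k = walk_hom Z g1 (fst ?k [])"
    using homC_eq_walk_hom[OF wfZ covZ nlZ, of "fst ?k" "snd ?k"] homC_compose[OF wf_unf hom morh] by simp
  moreover have "fst ?k [] = base" using Nil_in_nodes hz unfolding compose_with_def walk_hom_def by simp
  ultimately show "?k = walk_hom Z g1 base" by simp
qed

lemma cycle_of_hom:
  assumes k: "(k0, k1) \<in> homC unf unf_proj last Y f0 f1"
    and ck: "compose_with unf h0 h1 (k0, k1) = walk_hom Z g1 base"
  shows "compose_with (cyc p) k0 k1 (cyc_emb0, cyc_emb1) \<in> nb_cycles p Y"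
    and "compose_with (cyc p) h0 h1 (compose_with (cyc p) k0 k1 (cyc_emb0, cyc_emb1)) = (d0, d1)"
proof -
  let ?c = "compose_with (cyc p) k0 k1 (cyc_emb0, cyc_emb1)"
  have mk: "morphism unf Y k0 k1" using k unfolding homC_def covering_def by auto
  have on_nodes: "h0 (k0 (cyc_emb0 n)) = d0 n" if n: "n < p" for n
  proof -
    have "h0 (k0 (cyc_emb0 n)) = fst (compose_with unf h0 h1 (k0, k1)) (cyc_emb0 n)"
      using cword_prefix_in_nodes[OF n] by (simp add: compose_with_def cyc_emb0_def)
    then show ?thesis using ck walk_hom_Z_cyc_emb0[OF n] by simp
  qed
  have on_harcs: "h1 (k1 (cyc_emb1 u)) = d1 u" if u: "u \<in> harcs (cyc p)" for u
  proof -
    have "cyc_emb1 u \<in> unf_harcs" using cyc_emb_morphism u unfolding morphism_def by auto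
    then have "h1 (k1 (cyc_emb1 u)) = snd (compose_with unf h0 h1 (k0, k1)) (cyc_emb1 u)"
      by (simp add: compose_with_def)
    then show ?thesis using ck walk_hom_Z_cyc_emb1[OF u] by simp
  qed
  have dex: "d0 \<in> extensional (nodes (cyc p))" "d1 \<in> extensional (harcs (cyc p))"
    using dcyc unfolding nb_cycles_def p_cycles_def by auto
  have "restrict (h0 \<circ> fst ?c) (nodes (cyc p)) = d0"
    by (rule extensionalityI[OF _ dex(1)]) (simp_all add: compose_with_def on_nodes)
  moreover have "restrict (h1 \<circ> snd ?c) (harcs (cyc p)) = d1"
    by (rule extensionalityI[OF _ dex(2)]) (use on_harcs in \<open>simp_all add: compose_with_def\<close>)
  ultimately show eq: "compose_with (cyc p) h0 h1 ?c = (d0, d1)"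
    unfolding compose_with_def by simp
  have "?c \<in> p_cycles p Y"
    using morphism_comp[OF wf_cyc cyc_emb_morphism mk] unfolding p_cycles_def compose_with_def by simp
  moreover have "\<not> backtracking p (snd ?c)"
    using backtracking_compose[of p "snd ?c" h0 h1 "fst ?c"] eq d_no_backtrack by auto
  ultimately show "?c \<in> nb_cycles p Y" unfolding nb_cycles_def by simp
qed

lemma weak_equiv_unf:
  assumes "weak_equiv X Y f0 f1 Z g0 g1 h0 h1"
  shows "bij_betw (compose_with unf h0 h1) (homC unf unf_proj last Y f0 f1) (homC unf unf_proj last Z g0 g1)"
  using assms in_R_unf p1 unfolding weak_equiv_def by blast

lemma lift_cycle_unique:
  assumes we: "weak_equiv X Y f0 f1 Z g0 g1 h0 h1"
    and c: "(c0, c1) \<in> p_cycles p Y" "compose_with (cyc p) h0 h1 (c0, c1) = (d0, d1)"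
    and c': "(c0', c1') \<in> p_cycles p Y" "compose_with (cyc p) h0 h1 (c0', c1') = (d0, d1)"
  shows "(c0, c1) = (c0', c1')"
proof -
  have "walk_hom Y f1 (c0 0) = walk_hom Y f1 (c0' 0)"
    using inj_onD[OF bij_betw_imp_inj_on[OF weak_equiv_unf[OF we]]] lift_cycle_hom[OF c] lift_cycle_hom[OF c']
    by metis
  then have "c0 0 = c0' 0" by (metis walk_hom_Nil)
  then show ?thesis
    using cycle_eqI[OF wfY uY p1 length_cword c(1) lift_cycle_labels[OF c] c'(1) lift_cycle_labels[OF c']]
    by simp
qed

lemma lift_cycle_exists:
  assumes "weak_equiv X Y f0 f1 Z g0 g1 h0 h1"
  shows "\<exists>c\<in>nb_cycles p Y. compose_with (cyc p) h0 h1 c = (d0, d1)"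
proof -
  have "walk_hom Z g1 base \<in> compose_with unf h0 h1 ` homC unf unf_proj last Y f0 f1"
    using weak_equiv_unf[OF assms] walk_hom_Z unfolding bij_betw_def by simp
  then obtain k0 k1 where "(k0, k1) \<in> homC unf unf_proj last Y f0 f1"
      "compose_with unf h0 h1 (k0, k1) = walk_hom Z g1 base"
    by (auto simp del: compose_with_def)
  then show ?thesis using cycle_of_hom by blast
qed

end

lemma nb_cycles_bij_if_weak_equiv:
  assumes wfX: "wf_graph X" and objY: "objC X Y f0 f1" and objZ: "objC X Z g0 g1"
    and nlY: "\<not> has_loop Y" and nlZ: "\<not> has_loop Z" and morh: "morC X Y f0 f1 Z g0 g1 h0 h1"
    and we: "weak_equiv X Y f0 f1 Z g0 g1 h0 h1" and p1: "p \<ge> 1"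
  shows "bij_betw (compose_with (cyc p) h0 h1) (nb_cycles p Y) (nb_cycles p Z)"
proof -
  have wfY: "wf_graph Y" using objY unfolding objC_def by blast
  have covh: "covering Y Z h0 h1" using morh unfolding morC_def by blast
  have lift: "nb_cycle_lift X Z g0 g1 p d0 d1 Y f0 f1 h0 h1" if "(d0, d1) \<in> nb_cycles p Z" for d0 d1
    using assms that by unfold_locales
  note into = nb_cycles_compose[OF wfY covh nlY]
  have "inj_on (compose_with (cyc p) h0 h1) (nb_cycles p Y)"
  proof (rule inj_onI)
    fix c c' assume c: "c \<in> nb_cycles p Y" and c': "c' \<in> nb_cycles p Y"
      and eq: "compose_with (cyc p) h0 h1 c = compose_with (cyc p) h0 h1 c'"
    obtain d0 d1 where d: "compose_with (cyc p) h0 h1 c = (d0, d1)" by fastforce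
    interpret nb_cycle_lift X Z g0 g1 p d0 d1 Y f0 f1 h0 h1 using lift into[OF c] d by simp
    show "c = c'"
      using lift_cycle_unique[OF we, of "fst c" "snd c" "fst c'" "snd c'"] c c' d eq
      unfolding nb_cycles_def by auto
  qed
  moreover have "compose_with (cyc p) h0 h1 ` nb_cycles p Y = nb_cycles p Z"
  proof
    show "compose_with (cyc p) h0 h1 ` nb_cycles p Y \<subseteq> nb_cycles p Z" using into by blast
  next
    show "nb_cycles p Z \<subseteq> compose_with (cyc p) h0 h1 ` nb_cycles p Y"
    proof
      fix d assume d: "d \<in> nb_cycles p Z"
      interpret nb_cycle_lift X Z g0 g1 p "fst d" "snd d" Y f0 f1 h0 h1 using lift d by simp
      show "d \<in> compose_with (cyc p) h0 h1 ` nb_cycles p Y" using lift_cycle_exists[OF we] by force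
    qed
  qed
  ultimately show ?thesis unfolding bij_betw_def by blast
qed

lemma ihara_zeta_eqI:
  assumes "\<And>p. p \<ge> 1 \<Longrightarrow> cnum Y p = cnum Z p"
  shows "ihara_zeta Y = ihara_zeta Z"
proof -
  have "(\<lambda>p. if p = 0 then 0 else of_nat (cnum Y p) / of_nat p :: real)
      = (\<lambda>p. if p = 0 then 0 else of_nat (cnum Z p) / of_nat p)"
    using assms by (intro ext) simp
  then show ?thesis unfolding ihara_zeta_def by simp
qed

theorem proposition5p4:
  fixes X :: "('x, 'xh) ugraph"
    and Y :: "('y, 'yh) ugraph" and f0 :: "'y \<Rightarrow> 'x" and f1 :: "'yh \<Rightarrow> 'xh"
    and Z :: "('z, 'zh) ugraph" and g0 :: "'z \<Rightarrow> 'x" and g1 :: "'zh \<Rightarrow> 'xh"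
    and h0 :: "'y \<Rightarrow> 'z" and h1 :: "'yh \<Rightarrow> 'zh"
  assumes "wf_graph X"
    and "objC X Y f0 f1" and "objC X Z g0 g1"
    and "\<not> has_loop Y" and "\<not> has_loop Z"
    and "\<And>p. p \<ge> 1 \<Longrightarrow> finite (nb_cycles p Y)"
    and "\<And>p. p \<ge> 1 \<Longrightarrow> finite (nb_cycles p Z)"
    and "morC X Y f0 f1 Z g0 g1 h0 h1"
    and "weak_equiv X Y f0 f1 Z g0 g1 h0 h1"
  shows "ihara_zeta Y = ihara_zeta Z"
proof (rule ihara_zeta_eqI)
  fix p :: nat assume "p \<ge> 1"
  then have "bij_betw (compose_with (cyc p) h0 h1) (nb_cycles p Y) (nb_cycles p Z)"
    using nb_cycles_bij_if_weak_equiv assms(1-5,8,9) by blast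
  then show "cnum Y p = cnum Z p" unfolding cnum_def by (rule bij_betw_same_card)
qed

end
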